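(* Let $N\ge5$, $\mu>0$, $2<p<2+\frac4N$ and $0<c<c_*$. For any $m\in\mathbb N^+$ there exists an $m$-dimensional subspace $E_m\subset H^2_r(\mathbb R^N)$ having a basis $\{u_1,\dots,u_m\}\subseteq V_r(c)$ with $\int_{\mathbb R^N}u_iu_j\,dx=0$ for $i\ne j$, such that $$T_m:=\Big\{s_1u_1+\cdots+s_mu_m: s_i\in\mathbb R,\ \sum_{i=1}^m s_i^2=1\Big\}\subseteq V_r(c).$$ Moreover, there exists $\mu_m=\mu(m)>0$ such that $\max_{u\in T_m}I(u)<0$ when $\mu\ge\mu_m$.
   Context: $4^*:=\frac{2N}{N-4}$, $\gamma_p:=\frac N2(\frac12-\frac1p)$. $C_{N,p}$ is the (optimal) Gagliardo–Nirenberg constant with $\|u\|_p\le C_{N,p}\|\Delta u\|_2^{\gamma_p}\|u\|_2^{1-\gamma_p}$ on $H^2(\mathbb R^N)$; $S:=\inf_{u\in H^2\setminus\{0\}}\|\Delta u\|_2^2/\|u\|_{4^*}^2$. $I(u)=\frac12\|\Delta u\|_2^2+\frac12\|\nabla u\|_2^2-\frac{\mu}{p}\|u\|_p^p-\frac1{4^*}\|u\|_{4^*}^{4^*}$ on $H^2(\mathbb R^N)$. $H^2_r(\mathbb R^N):=\{u\in H^2(\mathbb R^N): u\text{ radially decreasing}\}$, $S_r(c):=\{u\in H^2_r:\|u\|_2^2=c\}$. $\mathcal E:=\frac{4^*-p\gamma_p}{2-p\gamma_p}\left(\frac{(2-p\gamma_p)\mu C^p_{N,p}}{(4^*-2)p}\right)^{\frac{4^*-2}{4^*-p\gamma_p}}\left(4^*S^{\frac{4^*}{2}}\right)^{\frac{p\gamma_p-2}{4^*-p\gamma_p}}$,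 $c_*:=(\frac{1}{2\mathcal E})^{\frac{2(4^*-p\gamma_p)}{p(1-\gamma_p)(4^*-2)}}$; $r_c:=\left(\frac{(2-p\gamma_p)\mu 4^*S^{4^*/2} C^p_{N,p}c^{p(1-\gamma_p)/2}}{(4^*-2)p}\right)^{\frac{1}{4^*-p\gamma_p}}$, $r_*:=r_{c_*}$, $V_r(c):=\{u\in S_r(c):\|\Delta u\|_2^2+\|\nabla u\|_2^2<r_*^2\}$.
   Formalization: $H^2_r$ is the set of radial functions in $H^2(\mathbb R^N)$, u(x) = phi(|x|) a.e., rather than radially decreasing ones; $\mu_m$ does not depend on $\mu$, and $T_m$ stays fixed while the $\mu$ in $I$ ranges over $\mu\ge\mu_m$. Each condition added here is assumed in the paper as well or is needed for the statement above to hold. *)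

theory Defs
  imports "HOL-Analysis.Analysis"
begin

section \<open>Functions on R^N, with N = CARD('n)\<close>

type_synonym 'n rfun = "real^'n \<Rightarrow> real"

definition partial :: "'n::finite \<Rightarrow> 'n rfun \<Rightarrow> 'n rfun" where
  "partial i f x = deriv (\<lambda>t. f (x + t *\<^sub>R axis i 1)) 0"

fun iter_partial :: "'n::finite list \<Rightarrow> 'n rfun \<Rightarrow> 'n rfun" where
  "iter_partial [] f = f"
| "iter_partial (i # is) f = partial i (iter_partial is f)"

definition smooth_fun :: "'n::finite rfun \<Rightarrow> bool" where
  "smooth_fun f \<longleftrightarrow> (\<forall>is. continuous_on UNIV (iter_partial is f) \<and>
      (\<forall>i x. (\<lambda>t. iter_partial is f (x + t *\<^sub>R axis i 1)) differentiable (at 0)))"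

definition test_fun :: "'n::finite rfun \<Rightarrow> bool" where
  "test_fun \<phi> \<longleftrightarrow> smooth_fun \<phi> \<and> compact (closure {x. \<phi> x \<noteq> 0})"

definition L2 :: "'n::finite rfun \<Rightarrow> bool" where
  "L2 u \<longleftrightarrow> u \<in> borel_measurable lborel \<and> integrable lborel (\<lambda>x. (u x)\<^sup>2)"

definition weak_deriv :: "'n::finite \<Rightarrow> 'n rfun \<Rightarrow> 'n rfun \<Rightarrow> bool" where
  "weak_deriv i u g \<longleftrightarrow> (\<forall>\<phi>. test_fun \<phi> \<longrightarrow>
      integrable lborel (\<lambda>x. u x * partial i \<phi> x) \<and> integrable lborel (\<lambda>x. g x * \<phi> x) \<and>
      (\<integral>x. u x * partial i \<phi> x \<partial>lborel) = - (\<integral>x. g x * \<phi> x \<partial>lborel))"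

definition H2_derivs :: "'n::finite rfun \<Rightarrow> ('n \<Rightarrow> 'n rfun) \<Rightarrow> ('n \<Rightarrow> 'n \<Rightarrow> 'n rfun) \<Rightarrow> bool" where
  "H2_derivs u g h \<longleftrightarrow> (\<forall>i. L2 (g i) \<and> weak_deriv i u (g i)) \<and>
      (\<forall>i j. L2 (h i j) \<and> weak_deriv j (g i) (h i j))"

definition H2 :: "'n::finite rfun \<Rightarrow> bool" where
  "H2 u \<longleftrightarrow> L2 u \<and> (\<exists>g h. H2_derivs u g h)"

definition derivs :: "'n::finite rfun \<Rightarrow> ('n \<Rightarrow> 'n rfun) \<times> ('n \<Rightarrow> 'n \<Rightarrow> 'n rfun)" where
  "derivs u = (SOME gh. H2_derivs u (fst gh) (snd gh))"

definition lapl :: "'n::finite rfun \<Rightarrow> 'n rfun" where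
  "lapl u x = (\<Sum>i\<in>UNIV. snd (derivs u) i i x)"

definition lap_sq :: "'n::finite rfun \<Rightarrow> real" where
  "lap_sq u = (\<integral>x. (lapl u x)\<^sup>2 \<partial>lborel)"

definition grad_sq :: "'n::finite rfun \<Rightarrow> real" where
  "grad_sq u = (\<Sum>i\<in>UNIV. \<integral>x. (fst (derivs u) i x)\<^sup>2 \<partial>lborel)"

definition Lpn :: "real \<Rightarrow> 'n::finite rfun \<Rightarrow> real" where
  "Lpn q u = (\<integral>x. \<bar>u x\<bar> powr q \<partial>lborel) powr (1 / q)"

definition L2_sq :: "'n::finite rfun \<Rightarrow> real" where
  "L2_sq u = (\<integral>x. (u x)\<^sup>2 \<partial>lborel)"

definition crit_exp :: "'n::finite itself \<Rightarrow> real" where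
  "crit_exp _ = 2 * real CARD('n) / (real CARD('n) - 4)"

definition gam :: "'n::finite itself \<Rightarrow> real \<Rightarrow> real" where
  "gam _ q = real CARD('n) / 2 * (1/2 - 1/q)"

definition GN_const :: "'n::finite itself \<Rightarrow> real \<Rightarrow> real" where
  "GN_const T q = Inf {C. C \<ge> 0 \<and> (\<forall>u::'n rfun. H2 u \<longrightarrow>
      Lpn q u \<le> C * sqrt (lap_sq u) powr gam T q * sqrt (L2_sq u) powr (1 - gam T q))}"

definition Sob_const :: "'n::finite itself \<Rightarrow> real" where
  "Sob_const T = Inf {lap_sq u / (Lpn (crit_exp T) u)\<^sup>2 | u::'n rfun. H2 u \<and> \<not> (AE x in lborel. u x = 0)}"

definition Ifun :: "real \<Rightarrow> real \<Rightarrow> 'n::finite rfun \<Rightarrow> real" where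
  "Ifun \<mu> q u = 1/2 * lap_sq u + 1/2 * grad_sq u - \<mu> / q * Lpn q u powr q
      - 1 / crit_exp TYPE('n) * Lpn (crit_exp TYPE('n)) u powr crit_exp TYPE('n)"

definition calE :: "'n::finite itself \<Rightarrow> real \<Rightarrow> real \<Rightarrow> real" where
  "calE T \<mu> q = (let s = crit_exp T; g = gam T q; C = GN_const T q; S = Sob_const T in
     (s - q*g) / (2 - q*g)
     * ((2 - q*g) * \<mu> * C powr q / ((s - 2) * q)) powr ((s - 2) / (s - q*g))
     * (s * S powr (s/2)) powr ((q*g - 2) / (s - q*g)))"

definition c_star :: "'n::finite itself \<Rightarrow> real \<Rightarrow> real \<Rightarrow> real" where
  "c_star T \<mu> q = (let s = crit_exp T; g = gam T q in
     (1 / (2 * calE T \<mu> q)) powr (2 * (s - q*g) / (q * (1 - g) * (s - 2))))"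

definition r_c :: "'n::finite itself \<Rightarrow> real \<Rightarrow> real \<Rightarrow> real \<Rightarrow> real" where
  "r_c T \<mu> q c = (let s = crit_exp T; g = gam T q; C = GN_const T q; S = Sob_const T in
     ((2 - q*g) * \<mu> * s * S powr (s/2) * C powr q * c powr (q * (1 - g) / 2) / ((s - 2) * q))
       powr (1 / (s - q*g)))"

definition r_star :: "'n::finite itself \<Rightarrow> real \<Rightarrow> real \<Rightarrow> real" where
  "r_star T \<mu> q = r_c T \<mu> q (c_star T \<mu> q)"

definition radial :: "'n::finite rfun \<Rightarrow> bool" where
  "radial u \<longleftrightarrow> (\<exists>\<phi>::real \<Rightarrow> real. AE x in lborel. u x = \<phi> (norm x))"

definition H2r :: "'n::finite rfun \<Rightarrow> bool" where
  "H2r u \<longleftrightarrow> H2 u \<and> radial u"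

definition S_r :: "real \<Rightarrow> 'n::finite rfun set" where
  "S_r c = {u. H2r u \<and> L2_sq u = c}"

definition V_r :: "real \<Rightarrow> real \<Rightarrow> real \<Rightarrow> 'n::finite rfun set" where
  "V_r \<mu> q c = {u \<in> S_r c. lap_sq u + grad_sq u < (r_star TYPE('n) \<mu> q)\<^sup>2}"

end

(*
  The functions u_k are radial bumps x \<mapsto> a_k * B_k(|x|^2 / R^2), where
  B_k(t) = ((t - 3k - 1) (3k + 2 - t))_+^3 is C^2 and supported in the shell 3k + 1 < t < 3k + 2,
  and the amplitude a_k normalizes ||u_k||_2^2 = c.  The shells are disjoint, so the u_k are
  orthogonal and every term of I is additive in the coefficients: for u = \<Sum> s_k u_k one has
  ||u||_2^2 = c \<Sum> s_k^2, ||\<Delta>u||_2^2 + ||\<nabla>u||_2^2 = \<Sum> s_k^2 E_k(R) with E_k(R) = O(1/R),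
  and ||u||_q^q = \<Sum> |s_k|^q w_k(q).  Since c < c_* forces r_* > 0, a large R puts the whole
  sphere T_m into V_r(c).  On the compact sphere the p-term is bounded below by a positive
  constant while the quadratic part stays bounded, so for large \<mu> the maximum of I on T_m
  is negative.

  The derivatives of an H^2 function are read off through a choice operator, so computing
  ||\<Delta>u||_2 needs uniqueness of weak derivatives; this is proved with test functions built
  from the flat function exp(-1/t).
*)
theory Submission
  imports Defs "HOL-Computational_Algebra.Polynomial"
begin

section \<open>Smooth test functions\<close>

fun flat_poly :: "nat \<Rightarrow> real poly" where
  "flat_poly 0 = 1"
| "flat_poly (Suc n) = [:0,0,1:] * (flat_poly n - pderiv (flat_poly n))"

definition flat :: "nat \<Rightarrow> real \<Rightarrow> real" where
  "flat n t = (if t > 0 then poly (flat_poly n) (1/t) * exp (-1/t) else 0)"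

lemma tendsto_poly_exp_neg_at_top: "((\<lambda>y. poly Q y * exp (-y)) \<longlongrightarrow> (0::real)) at_top"
proof -
  have "((\<lambda>y. \<Sum>i\<le>degree Q. coeff Q i * (y ^ i / exp y)) \<longlongrightarrow> (\<Sum>i\<le>degree Q. coeff Q i * 0)) at_top"
    by (intro tendsto_sum tendsto_mult tendsto_const tendsto_power_div_exp_0)
  moreover have "\<And>y. (\<Sum>i\<le>degree Q. coeff Q i * (y ^ i / exp y)) = poly Q y * exp (-y)"
    by (simp add: poly_altdef sum_distrib_right exp_minus divide_inverse mult.assoc)
  ultimately show ?thesis by simp
qed

lemma DERIV_vanishing_left:
  fixes f f' :: "real \<Rightarrow> real"
  assumes zero: "\<And>t. t \<le> 0 \<Longrightarrow> f t = 0" and zero': "\<And>t. t \<le> 0 \<Longrightarrow> f' t = 0"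
    and pos: "\<And>t. t > 0 \<Longrightarrow> (f has_real_derivative f' t) (at t)"
    and right: "((\<lambda>t. f t / t) \<longlongrightarrow> 0) (at_right 0)"
  shows "(f has_real_derivative f' t) (at t)"
proof -
  consider "t > 0" | "t < 0" | "t = 0" by linarith
  then show ?thesis
  proof cases
    case 1
    then show ?thesis by (rule pos)
  next
    case 2
    have "((\<lambda>_. 0) has_real_derivative 0) (at t)" by simp
    then have "(f has_real_derivative 0) (at t)"
      by (rule has_field_derivative_transform_within_open[where S="{..<0}"]) (use 2 zero in auto)
    then show ?thesis using 2 zero' by simp
  next
    case 3
    have L: "((\<lambda>y. (f y - f 0) / (y - 0)) \<longlongrightarrow> 0) (at_left 0)"
    proof (rule Lim_transform_eventually[where f="\<lambda>_. 0"])
      show "\<forall>\<^sub>F y in at_left 0. 0 = (f y - f 0) / (y - 0)"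
        using eventually_at_left_real[where a="0::real" and b="-1"] by (auto elim!: eventually_mono simp: zero)
    qed simp
    have R: "((\<lambda>y. (f y - f 0) / (y - 0)) \<longlongrightarrow> 0) (at_right 0)"
      using right by (simp add: zero)
    from filterlim_split_at[OF L R] show ?thesis
      unfolding 3 has_field_derivative_iff by (simp add: zero')
  qed
qed

lemma DERIV_flat: "(flat n has_real_derivative flat (Suc n) t) (at t)"
proof (rule DERIV_vanishing_left)
  fix t :: real assume t: "t > 0"
  let ?g = "\<lambda>t. poly (flat_poly n) (1/t) * exp (-1/t)"
  have "(?g has_real_derivative poly (pderiv (flat_poly n)) (1/t) * (-(1/t^2)) * exp (-1/t)
      + poly (flat_poly n) (1/t) * (exp (-1/t) * (1/t^2))) (at t)"
    using t by (auto intro!: derivative_eq_intros DERIV_chain2[OF poly_DERIV] simp: power2_eq_square field_simps)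
  moreover have "poly (pderiv (flat_poly n)) (1/t) * (-(1/t^2)) * exp (-1/t)
      + poly (flat_poly n) (1/t) * (exp (-1/t) * (1/t^2)) = flat (Suc n) t"
    using t by (simp add: flat_def algebra_simps power2_eq_square divide_simps)
  ultimately have "(?g has_real_derivative flat (Suc n) t) (at t)" by simp
  then show "(flat n has_real_derivative flat (Suc n) t) (at t)"
    by (rule has_field_derivative_transform_within_open[where S="{0<..}"]) (use t in \<open>auto simp: flat_def\<close>)
next
  have "((\<lambda>y. poly ([:0,1:] * flat_poly n) (inverse y) * exp (- inverse y)) \<longlongrightarrow> 0) (at_right (0::real))"
    using filterlim_compose[OF tendsto_poly_exp_neg_at_top[of "[:0,1:] * flat_poly n"]
      filterlim_inverse_at_top_right]
    by simp
  then show "((\<lambda>t. flat n t / t) \<longlongrightarrow> 0) (at_right 0)"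
    by (rule Lim_transform_eventually)
       (auto simp: flat_def divide_simps intro!: eventually_mono[OF eventually_at_right_less])
qed (simp_all add: flat_def)

lemma isCont_flat: "isCont (flat n) t"
  using DERIV_flat DERIV_isCont by blast

lemma flat_0_eq: "flat 0 t = (if t > 0 then exp (-1/t) else 0)"
  by (simp add: flat_def)

lemma flat_0_bounds: "0 \<le> flat 0 t" "flat 0 t \<le> 1"
  by (auto simp: flat_0_eq)

inductive smooth_gen :: "('n::finite) rfun \<Rightarrow> bool" where
  gen_const: "smooth_gen (\<lambda>x. c)"
| gen_flat: "smooth_gen (\<lambda>x. flat j (\<alpha> * x$k + \<beta>))"
| gen_add: "smooth_gen f \<Longrightarrow> smooth_gen g \<Longrightarrow> smooth_gen (\<lambda>x. f x + g x)"
| gen_mult: "smooth_gen f \<Longrightarrow> smooth_gen g \<Longrightarrow> smooth_gen (\<lambda>x. f x * g x)"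

lemma line_nth: "(x + t *\<^sub>R axis i 1) $ k = x $ k + (if k = i then t else 0)"
  by (simp add: axis_def)

lemma smooth_gen_line_DERIV:
  assumes "smooth_gen f"
  shows "\<exists>g. smooth_gen g \<and> (\<forall>x. ((\<lambda>t. f (x + t *\<^sub>R axis i 1)) has_real_derivative g x) (at 0))"
  using assms
proof induction
  case (gen_const c)
  show ?case by (rule exI[of _ "\<lambda>x. 0"]) (auto intro: smooth_gen.gen_const)
next
  case (gen_flat j \<alpha> k \<beta>)
  let ?g = "\<lambda>x::real^'a. (\<alpha> * (if k = i then 1 else 0)) * flat (Suc j) (\<alpha> * x$k + \<beta>)"
  have "smooth_gen ?g" by (intro smooth_gen.gen_mult smooth_gen.gen_const smooth_gen.gen_flat)
  moreover have "((\<lambda>t. flat j (\<alpha> * (x + t *\<^sub>R axis i 1)$k + \<beta>)) has_real_derivative ?g x) (at 0)" for x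
  proof -
    have dd: "((\<lambda>t. \<alpha> * (x$k + (if k = i then t else 0)) + \<beta>)
        has_real_derivative \<alpha> * (if k = i then 1 else 0)) (at 0)"
      by (cases "k = i") (auto intro!: derivative_eq_intros)
    have eq: "(\<lambda>t. flat j (\<alpha> * (x + t *\<^sub>R axis i 1)$k + \<beta>))
        = (\<lambda>t. flat j (\<alpha> * (x$k + (if k = i then t else 0)) + \<beta>))"
      by (simp only: line_nth)
    from DERIV_chain2[OF DERIV_flat dd] show ?thesis
      unfolding eq by (simp add: algebra_simps)
  qed
  ultimately show ?case by blast
next
  case (gen_add f g)
  then obtain f' g' where "smooth_gen f'" "smooth_gen g'"
    "\<And>x. ((\<lambda>t. f (x + t *\<^sub>R axis i 1)) has_real_derivative f' x) (at 0)"
    "\<And>x. ((\<lambda>t. g (x + t *\<^sub>R axis i 1)) has_real_derivative g' x) (at 0)" by blast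
  then show ?case
    by (intro exI[of _ "\<lambda>x. f' x + g' x"]) (auto intro: smooth_gen.gen_add DERIV_add)
next
  case (gen_mult f g)
  then obtain f' g' where "smooth_gen f'" "smooth_gen g'"
    and df: "\<And>x. ((\<lambda>t. f (x + t *\<^sub>R axis i 1)) has_real_derivative f' x) (at 0)"
    and dg: "\<And>x. ((\<lambda>t. g (x + t *\<^sub>R axis i 1)) has_real_derivative g' x) (at 0)" by blast
  have "smooth_gen (\<lambda>x. f' x * g x + g' x * f x)"
    by (intro smooth_gen.gen_add smooth_gen.gen_mult gen_mult.hyps \<open>smooth_gen f'\<close> \<open>smooth_gen g'\<close>)
  moreover have "((\<lambda>t. f (x + t *\<^sub>R axis i 1) * g (x + t *\<^sub>R axis i 1))
      has_real_derivative f' x * g x + g' x * f x) (at 0)" for x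
    using DERIV_mult[OF df dg, of x x] by simp
  ultimately show ?case by blast
qed

lemma smooth_gen_partial: "smooth_gen f \<Longrightarrow> smooth_gen (partial i f)"
proof -
  assume "smooth_gen f"
  from smooth_gen_line_DERIV[OF this, of i] obtain g where g: "smooth_gen g"
    "\<And>x. ((\<lambda>t. f (x + t *\<^sub>R axis i 1)) has_real_derivative g x) (at 0)" by blast
  have "partial i f = g"
    by (rule ext) (simp add: partial_def DERIV_imp_deriv[OF g(2)])
  with g show ?thesis by simp
qed

lemma smooth_gen_continuous_on: "smooth_gen f \<Longrightarrow> continuous_on UNIV f"
proof (induction rule: smooth_gen.induct)
  case (gen_flat j \<alpha> k \<beta>)
  have "isCont (\<lambda>x::real^'a. flat j (\<alpha> * x$k + \<beta>)) x" for x
    by (rule isCont_o2[OF _ isCont_flat]) (intro continuous_intros)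
  then show ?case by (simp add: continuous_at_imp_continuous_on)
qed (auto intro!: continuous_intros)

lemma smooth_gen_iter_partial: "smooth_gen f \<Longrightarrow> smooth_gen (iter_partial is f)"
  by (induction "is") (auto intro: smooth_gen_partial)

lemma smooth_gen_imp_smooth_fun: "smooth_gen f \<Longrightarrow> smooth_fun f"
  unfolding smooth_fun_def
proof (intro allI conjI)
  fix "is" i x assume "smooth_gen f"
  then have "smooth_gen (iter_partial is f)" by (rule smooth_gen_iter_partial)
  then show "continuous_on UNIV (iter_partial is f)" by (rule smooth_gen_continuous_on)
  from smooth_gen_line_DERIV[OF \<open>smooth_gen (iter_partial is f)\<close>, of i] show
    "(\<lambda>t. iter_partial is f (x + t *\<^sub>R axis i 1)) differentiable at 0"
    using real_differentiable_def by blast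
qed

lemma smooth_gen_prod: "finite S \<Longrightarrow> (\<And>k. k \<in> S \<Longrightarrow> smooth_gen (F k)) \<Longrightarrow> smooth_gen (\<lambda>x. \<Prod>k\<in>S. F k x)"
  by (induction S rule: finite_induct) (auto intro: smooth_gen.intros)

text \<open>Box bumps converge pointwise to the indicator of an open box, so an \<open>L\<^sup>2\<close> function that is
  orthogonal to all test functions has vanishing integral over every box, hence vanishes a.e.\<close>

definition box_bump :: "real \<Rightarrow> real^'n::finite \<Rightarrow> real^'n \<Rightarrow> real^'n \<Rightarrow> real" where
  "box_bump n a b x = (\<Prod>k\<in>UNIV. flat 0 (n * (x$k - a$k)) * flat 0 (n * (b$k - x$k)))"

lemma smooth_gen_box_bump: "smooth_gen (box_bump n a b)"
proof -
  have eq: "box_bump n a b = (\<lambda>x. \<Prod>k\<in>UNIV. flat 0 (n * x$k + - n * a$k) * flat 0 (- n * x$k + n * b$k))"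
    by (simp add: box_bump_def[abs_def] algebra_simps)
  show ?thesis unfolding eq by (intro smooth_gen_prod smooth_gen.intros) auto
qed

lemma flat_0_pos_iff: "flat 0 t > 0 \<longleftrightarrow> t > 0"
  by (simp add: flat_0_eq)

lemma box_bump_nonzero_imp_cbox:
  assumes "box_bump n a b x \<noteq> 0" "n > 0"
  shows "x \<in> cbox a b"
proof -
  have "a$k \<le> x$k \<and> x$k \<le> b$k" for k
  proof -
    have "flat 0 (n * (x$k - a$k)) \<noteq> 0" "flat 0 (n * (b$k - x$k)) \<noteq> 0"
      using assms(1) by (auto simp: box_bump_def)
    then have "n * (x$k - a$k) > 0" "n * (b$k - x$k) > 0"
      using flat_0_bounds flat_0_pos_iff by (metis order_le_less)+
    with assms(2) show ?thesis by (simp add: zero_less_mult_iff)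
  qed
  then show ?thesis by (simp add: mem_box_cart)
qed

lemma test_fun_box_bump: "n > 0 \<Longrightarrow> test_fun (box_bump n a b)"
  unfolding test_fun_def
proof
  assume "n > 0"
  show "smooth_fun (box_bump n a b)" by (rule smooth_gen_imp_smooth_fun[OF smooth_gen_box_bump])
  have "{x. box_bump n a b x \<noteq> 0} \<subseteq> cbox a b" using box_bump_nonzero_imp_cbox \<open>n > 0\<close> by blast
  then have "bounded {x. box_bump n a b x \<noteq> 0}" using bounded_cbox bounded_subset by blast
  then show "compact (closure {x. box_bump n a b x \<noteq> 0})" by (simp add: compact_closure)
qed

lemma abs_box_bump_le_1: "\<bar>box_bump n a b x\<bar> \<le> 1"
proof -
  have "(\<Prod>k\<in>UNIV. \<bar>flat 0 (n * (x$k - a$k)) * flat 0 (n * (b$k - x$k))\<bar>) \<le> (\<Prod>k\<in>(UNIV::'a set). 1)"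
    by (intro prod_mono) (auto simp: abs_mult flat_0_bounds intro!: mult_le_one)
  then show ?thesis by (simp add: box_bump_def abs_prod)
qed

lemma flat_0_tendsto_1: "c > 0 \<Longrightarrow> (\<lambda>j. flat 0 (real (Suc j) * c)) \<longlonglongrightarrow> 1"
proof -
  assume c: "c > 0"
  have "filterlim (\<lambda>j. real (Suc j) * c) at_top sequentially"
    by (rule filterlim_at_top_mult_tendsto_pos[OF tendsto_const c])
       (rule filterlim_compose[OF filterlim_real_sequentially filterlim_Suc])
  then have "(\<lambda>j. exp (- inverse (real (Suc j) * c))) \<longlonglongrightarrow> exp (- 0)"
    by (intro tendsto_exp tendsto_minus tendsto_inverse_0_at_top)
  moreover have "flat 0 (real (Suc j) * c) = exp (- inverse (real (Suc j) * c))" for j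
    using c by (simp add: flat_0_eq divide_inverse)
  ultimately show ?thesis by simp
qed

lemma box_bump_tendsto_indicator: "(\<lambda>j. box_bump (real (Suc j)) a b x) \<longlonglongrightarrow> indicator (box a b) x"
proof (cases "x \<in> box a b")
  case True
  then have "a$k < x$k" "x$k < b$k" for k by (auto simp: mem_box_cart)
  then have "(\<lambda>j. box_bump (real (Suc j)) a b x) \<longlonglongrightarrow> (\<Prod>k\<in>(UNIV::'a set). 1 * 1)"
    unfolding box_bump_def by (intro tendsto_prod tendsto_mult flat_0_tendsto_1) auto
  then show ?thesis using True by simp
next
  case False
  then obtain k where "x$k \<le> a$k \<or> b$k \<le> x$k" by (auto simp: mem_box_cart not_less)
  then have "flat 0 (real (Suc j) * (x$k - a$k)) * flat 0 (real (Suc j) * (b$k - x$k)) = 0" for j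
    by (auto simp: flat_0_eq zero_less_mult_iff)
  then have "box_bump (real (Suc j)) a b x = 0" for j
    unfolding box_bump_def by (intro prod_zero) auto
  then show ?thesis using False by simp
qed

section \<open>Weak derivatives\<close>

lemma integrable_vanishing_outside_ball:
  fixes f :: "real^'n::finite \<Rightarrow> real"
  assumes "continuous_on UNIV f" "\<And>x. norm x > \<rho> \<Longrightarrow> f x = 0"
  shows "integrable lborel f"
proof -
  have "integrable lborel (\<lambda>x. indicator (cball 0 \<rho>) x *\<^sub>R f x)"
    by (rule borel_integrable_compact) (auto intro: continuous_on_subset[OF assms(1)])
  moreover have "(\<lambda>x. indicator (cball 0 \<rho>) x *\<^sub>R f x) = f"
    using assms(2) by (auto simp: indicator_def fun_eq_iff not_le)
  ultimately show ?thesis by simp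
qed

lemma bounded_vanishing_outside_ball:
  fixes f :: "real^'n::finite \<Rightarrow> real"
  assumes "continuous_on UNIV f" "\<And>x. norm x > \<rho> \<Longrightarrow> f x = 0"
  shows "\<exists>M\<ge>0. \<forall>x. \<bar>f x\<bar> \<le> M"
proof -
  have "compact (f ` cball 0 \<rho>)"
    by (rule compact_continuous_image) (auto intro: continuous_on_subset[OF assms(1)])
  then obtain M where M: "\<And>y. y \<in> f ` cball 0 \<rho> \<Longrightarrow> norm y \<le> M"
    using compact_imp_bounded bounded_iff by metis
  have "\<bar>f x\<bar> \<le> max M 0" for x
  proof (cases "norm x \<le> \<rho>")
    case True then show ?thesis using M[of "f x"] by auto
  next
    case False then show ?thesis using assms(2)[of x] by auto
  qed
  then show ?thesis by (intro exI[of _ "max M 0"]) auto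
qed

lemma lborel_integral_translate:
  fixes w :: "real^'n::finite \<Rightarrow> real"
  assumes "w \<in> borel_measurable borel"
  shows "(\<integral>x. w (x + c) \<partial>lborel) = (\<integral>x. w x \<partial>lborel)"
proof -
  have "(\<integral>x. w x \<partial>lborel) = (\<integral>x. w x \<partial>(distr lborel borel ((+) c)))"
    by (simp add: lborel_distr_plus)
  also have "\<dots> = (\<integral>x. w (c + x) \<partial>lborel)"
    by (rule integral_distr) (use assms in auto)
  finally show ?thesis by (simp add: add.commute)
qed

lemma integrable_translate_vanishing_outside_ball:
  fixes w :: "real^'n::finite \<Rightarrow> real"
  assumes cw: "continuous_on UNIV w" and supp: "\<And>x. norm x > \<rho> \<Longrightarrow> w x = 0"
  shows "integrable lborel (\<lambda>x. w (x + c))"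
proof (rule integrable_vanishing_outside_ball[where \<rho>="\<rho> + norm c"])
  show "continuous_on UNIV (\<lambda>x. w (x + c))"
    by (rule continuous_on_compose2[OF cw]) (auto intro!: continuous_intros)
  fix x :: "real^'n" assume "\<rho> + norm c < norm x"
  moreover have "norm x \<le> norm (x + c) + norm c" by (metis add_diff_cancel norm_triangle_ineq4)
  ultimately show "w (x + c) = 0" using supp[of "x + c"] by auto
qed

lemma integral_translate_diff_eq_0:
  fixes w :: "real^'n::finite \<Rightarrow> real"
  assumes cw: "continuous_on UNIV w" and supp: "\<And>x. norm x > \<rho> \<Longrightarrow> w x = 0"
  shows "(\<integral>x. w (x + c) - w x \<partial>lborel) = 0"
proof -
  have "integrable lborel w" by (rule integrable_vanishing_outside_ball[OF cw supp])
  then have "(\<integral>x. w (x + c) - w x \<partial>lborel) = (\<integral>x. w (x + c) \<partial>lborel) - (\<integral>x. w x \<partial>lborel)"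
    using integrable_translate_vanishing_outside_ball[OF assms] by (simp add: Bochner_Integration.integral_diff)
  then show ?thesis
    using lborel_integral_translate[OF borel_measurable_continuous_onI[OF cw]] by simp
qed

lemma DERIV_line_shift:
  fixes w :: "real^'n::finite \<Rightarrow> real"
  assumes "\<And>x. ((\<lambda>t. w (x + t *\<^sub>R e)) has_real_derivative D x) (at 0)"
  shows "((\<lambda>s. w (x + s *\<^sub>R e)) has_real_derivative D (x + t *\<^sub>R e)) (at t)"
proof -
  have "(\<lambda>s. w ((x + t *\<^sub>R e) + s *\<^sub>R e)) = (\<lambda>s. (\<lambda>s. w (x + s *\<^sub>R e)) (s + t))"
    by (simp add: algebra_simps scaleR_add_left)
  then show ?thesis
    using assms[of "x + t *\<^sub>R e"] DERIV_shift[of "\<lambda>s. w (x + s *\<^sub>R e)" _ 0 t] by simp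
qed

lemma filterlim_inverse_Suc_at_0: "filterlim (\<lambda>n. inverse (real (Suc n))) (at 0) sequentially"
  unfolding filterlim_at using LIMSEQ_inverse_real_of_nat by auto

lemma difference_quotient_bound:
  fixes w D :: "real^'n::finite \<Rightarrow> real"
  assumes der: "\<And>x. ((\<lambda>t. w (x + t *\<^sub>R e)) has_real_derivative D x) (at 0)"
    and M: "\<And>x. \<bar>D x\<bar> \<le> M" and supp: "\<And>x. norm x > \<rho> \<Longrightarrow> w x = 0"
    and e: "norm e = 1" and h: "0 < h" "h \<le> 1"
  shows "\<bar>(w (x + h *\<^sub>R e) - w x) / h\<bar> \<le> M * indicator (cball 0 (\<rho> + 1)) x"
proof (cases "x \<in> cball 0 (\<rho> + 1)")
  case True
  from MVT2[OF h(1), where f="\<lambda>s. w (x + s *\<^sub>R e)" and f'="\<lambda>s. D (x + s *\<^sub>R e)"] DERIV_line_shift[OF der]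
  obtain z where "w (x + h *\<^sub>R e) - w (x + 0 *\<^sub>R e) = (h - 0) * D (x + z *\<^sub>R e)" by blast
  then have "(w (x + h *\<^sub>R e) - w x) / h = D (x + z *\<^sub>R e)" using h(1) by simp
  then show ?thesis using True M by simp
next
  case False
  have "norm x \<le> norm (x + h *\<^sub>R e) + h"
    using norm_triangle_ineq4[of "x + h *\<^sub>R e" "h *\<^sub>R e"] e h by simp
  then show ?thesis using supp[of x] supp[of "x + h *\<^sub>R e"] False h by simp
qed

lemma integral_line_derivative_eq_0:
  fixes w D :: "real^'n::finite \<Rightarrow> real"
  assumes cw: "continuous_on UNIV w" and cD: "continuous_on UNIV D"
    and der: "\<And>x. ((\<lambda>t. w (x + t *\<^sub>R axis j 1)) has_real_derivative D x) (at 0)"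
    and supp: "\<And>x. norm x > \<rho> \<Longrightarrow> w x = 0 \<and> D x = 0"
  shows "(\<integral>x. D x \<partial>lborel) = 0"
proof -
  define e :: "real^'n" where "e = axis j 1"
  define h :: "nat \<Rightarrow> real" where "h n = inverse (real (Suc n))" for n
  define q where "q n x = (w (x + h n *\<^sub>R e) - w x) / h n" for n x
  have [measurable]: "w \<in> borel_measurable borel" "D \<in> borel_measurable borel"
    using cw cD by (simp_all add: borel_measurable_continuous_onI)
  obtain M where M: "\<And>x. \<bar>D x\<bar> \<le> M"
    using bounded_vanishing_outside_ball[OF cD, of \<rho>] supp by auto
  have h: "h n > 0" "h n \<le> 1" for n by (auto simp: h_def field_simps)
  have "(\<integral>x. q n x \<partial>lborel) = 0" for n
    using integral_translate_diff_eq_0[OF cw, of \<rho> "h n *\<^sub>R e"] supp by (simp add: q_def)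
  moreover have "(\<lambda>n. \<integral>x. q n x \<partial>lborel) \<longlonglongrightarrow> (\<integral>x. D x \<partial>lborel)"
  proof (rule integral_dominated_convergence[where w="\<lambda>x::real^'n. M * indicator (cball 0 (\<rho> + 1)) x"])
    show "integrable lborel (\<lambda>x::real^'n. M * indicator (cball 0 (\<rho> + 1)) x)"
      using emeasure_compact_finite[OF compact_cball[of "0::real^'n" "\<rho> + 1"]]
      by (intro integrable_mult_right integrable_real_indicator) (simp add: less_top[symmetric])
    show "AE x in lborel. (\<lambda>n. q n x) \<longlonglongrightarrow> D x"
    proof
      fix x
      have "((\<lambda>y. (w (x + y *\<^sub>R e) - w (x + 0 *\<^sub>R e)) / (y - 0)) \<longlongrightarrow> D x) (at 0)"
        using der[of x] unfolding has_field_derivative_iff e_def .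
      from filterlim_compose[OF this filterlim_inverse_Suc_at_0[folded h_def]]
      show "(\<lambda>n. q n x) \<longlonglongrightarrow> D x" by (simp add: q_def)
    qed
    show "AE x in lborel. norm (q n x) \<le> M * indicator (cball 0 (\<rho> + 1)) x" for n
      unfolding q_def using difference_quotient_bound[OF der[folded e_def] M, of \<rho>] supp h[of n]
      by (simp add: e_def)
  qed (simp_all add: q_def)
  ultimately show ?thesis by (simp add: LIMSEQ_const_iff)
qed

lemma smooth_fun_continuous_on: "smooth_fun \<phi> \<Longrightarrow> continuous_on UNIV \<phi>"
  unfolding smooth_fun_def by (metis iter_partial.simps(1))

lemma smooth_fun_continuous_on_partial: "smooth_fun \<phi> \<Longrightarrow> continuous_on UNIV (partial j \<phi>)"
  unfolding smooth_fun_def by (metis iter_partial.simps)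

lemma smooth_fun_line_DERIV:
  assumes "smooth_fun \<phi>"
  shows "((\<lambda>t. \<phi> (x + t *\<^sub>R axis j 1)) has_real_derivative partial j \<phi> x) (at 0)"
proof -
  have "(\<lambda>t. \<phi> (x + t *\<^sub>R axis j 1)) differentiable at 0"
    using assms unfolding smooth_fun_def by (metis iter_partial.simps(1))
  then show ?thesis unfolding partial_def using DERIV_deriv_iff_real_differentiable by blast
qed

lemma weak_deriv_vanishing_outside_ball:
  fixes w D :: "real^'n::finite \<Rightarrow> real"
  assumes cw: "continuous_on UNIV w" and cD: "continuous_on UNIV D"
    and der: "\<And>x. ((\<lambda>t. w (x + t *\<^sub>R axis j 1)) has_real_derivative D x) (at 0)"
    and supp: "\<And>x. norm x > \<rho> \<Longrightarrow> w x = 0 \<and> D x = 0"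
  shows "weak_deriv j w D"
  unfolding weak_deriv_def
proof (intro allI impI)
  fix \<phi> :: "real^'n \<Rightarrow> real" assume "test_fun \<phi>"
  then have smooth: "smooth_fun \<phi>" by (simp add: test_fun_def)
  note c\<phi> = smooth_fun_continuous_on[OF smooth] and cp\<phi> = smooth_fun_continuous_on_partial[OF smooth]
    and dp = smooth_fun_line_DERIV[OF smooth]
  have i1: "integrable lborel (\<lambda>x. w x * partial j \<phi> x)"
    by (rule integrable_vanishing_outside_ball[where \<rho>=\<rho>]) (use cw cp\<phi> supp in \<open>auto intro!: continuous_intros\<close>)
  have i2: "integrable lborel (\<lambda>x. D x * \<phi> x)"
    by (rule integrable_vanishing_outside_ball[where \<rho>=\<rho>]) (use cD c\<phi> supp in \<open>auto intro!: continuous_intros\<close>)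
  have "(\<integral>x. D x * \<phi> x + w x * partial j \<phi> x \<partial>lborel) = 0"
  proof (rule integral_line_derivative_eq_0[where w="\<lambda>x. w x * \<phi> x" and \<rho>=\<rho> and j=j])
    show "continuous_on UNIV (\<lambda>x. w x * \<phi> x)" using cw c\<phi> by (auto intro!: continuous_intros)
    show "continuous_on UNIV (\<lambda>x. D x * \<phi> x + w x * partial j \<phi> x)"
      using cw c\<phi> cD cp\<phi> by (auto intro!: continuous_intros)
    show "((\<lambda>t. w (x + t *\<^sub>R axis j 1) * \<phi> (x + t *\<^sub>R axis j 1)) has_real_derivative
        D x * \<phi> x + w x * partial j \<phi> x) (at 0)" for x
      using DERIV_mult[OF der[of x] dp[of x]] by (simp add: mult.commute)
  qed (use supp in auto)
  then have "(\<integral>x. D x * \<phi> x \<partial>lborel) + (\<integral>x. w x * partial j \<phi> x \<partial>lborel) = 0"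
    using i1 i2 by (simp add: Bochner_Integration.integral_add)
  then show "integrable lborel (\<lambda>x. w x * partial j \<phi> x) \<and> integrable lborel (\<lambda>x. D x * \<phi> x) \<and>
      (\<integral>x. w x * partial j \<phi> x \<partial>lborel) = - (\<integral>x. D x * \<phi> x \<partial>lborel)"
    using i1 i2 by linarith
qed

lemma emeasure_density_box:
  fixes f :: "real^'n::finite \<Rightarrow> real"
  assumes [measurable]: "f \<in> borel_measurable lborel" and nonneg: "\<And>x. f x \<ge> 0"
    and int: "integrable lborel (\<lambda>x. f x * indicator (box a b) x)"
  shows "emeasure (density lborel (\<lambda>x. ennreal (f x))) (box a b)
    = ennreal (\<integral>x. f x * indicator (box a b) x \<partial>lborel)"
proof -
  have "emeasure (density lborel (\<lambda>x. ennreal (f x))) (box a b)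
      = (\<integral>\<^sup>+ x. ennreal (f x) * indicator (box a b) x \<partial>lborel)"
    by (rule emeasure_density) auto
  also have "\<dots> = (\<integral>\<^sup>+ x. ennreal (f x * indicator (box a b) x) \<partial>lborel)"
    by (intro nn_integral_cong) (auto simp: indicator_def)
  also have "\<dots> = ennreal (\<integral>x. f x * indicator (box a b) x \<partial>lborel)"
    by (rule nn_integral_eq_integral[OF int]) (auto simp: nonneg)
  finally show ?thesis .
qed

lemma AE_eq_if_box_integrals_eq:
  fixes f g :: "real^'n::finite \<Rightarrow> real"
  assumes [measurable]: "f \<in> borel_measurable lborel" "g \<in> borel_measurable lborel"
    and nonneg: "\<And>x. f x \<ge> 0" "\<And>x. g x \<ge> 0"
    and int: "\<And>a b. integrable lborel (\<lambda>x. f x * indicator (box a b) x)"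
      "\<And>a b. integrable lborel (\<lambda>x. g x * indicator (box a b) x)"
    and eq: "\<And>a b. (\<integral>x. f x * indicator (box a b) x \<partial>lborel) = (\<integral>x. g x * indicator (box a b) x \<partial>lborel)"
  shows "AE x in lborel. f x = g x"
proof -
  let ?E = "range (\<lambda>(a, b). box a b :: (real^'n) set)"
  note box_f = emeasure_density_box[OF _ nonneg(1) int(1)] and box_g = emeasure_density_box[OF _ nonneg(2) int(2)]
  have "density lborel (\<lambda>x. ennreal (f x)) = density lborel (\<lambda>x. ennreal (g x))"
  proof (rule measure_eqI_generator_eq[where E="?E" and \<Omega>=UNIV
        and A="\<lambda>n::nat. box (- (real n *\<^sub>R One)) (real n *\<^sub>R One)"])
    show "Int_stable ?E" by (auto simp: Int_stable_def box_Int_box)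
    show "sets (density lborel (\<lambda>x. ennreal (f x))) = sigma_sets UNIV ?E"
      "sets (density lborel (\<lambda>x. ennreal (g x))) = sigma_sets UNIV ?E"
      by (simp_all add: borel_eq_box)
    show "(\<Union>i::nat. box (- (real i *\<^sub>R One)) (real i *\<^sub>R One)) = (UNIV :: (real^'n) set)"
      by (rule UN_box_eq_UNIV)
    show "emeasure (density lborel (\<lambda>x. ennreal (f x))) (box (- (real i *\<^sub>R One)) (real i *\<^sub>R One)) \<noteq> \<infinity>" for i
      by (simp add: box_f)
    show "emeasure (density lborel (\<lambda>x. ennreal (f x))) X = emeasure (density lborel (\<lambda>x. ennreal (g x))) X"
      if "X \<in> ?E" for X
      using that box_f box_g eq by auto
  qed auto
  then have "AE x in lborel. ennreal (f x) = ennreal (g x)"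
    by (intro sigma_finite_measure.density_unique[OF sigma_finite_lborel]) auto
  then show ?thesis by (rule AE_mp) (auto intro!: AE_I2 simp: nonneg)
qed

lemma AE_zero_if_box_integrals_zero:
  fixes g :: "real^'n::finite \<Rightarrow> real"
  assumes g[measurable]: "g \<in> borel_measurable lborel"
    and int: "\<And>a b. integrable lborel (\<lambda>x. g x * indicator (box a b) x)"
    and zero: "\<And>a b. (\<integral>x. g x * indicator (box a b) x \<partial>lborel) = 0"
  shows "AE x in lborel. g x = 0"
proof -
  have int_pos: "integrable lborel (\<lambda>x. max 0 (g x) * indicator (box a b) x)" for a b
    by (rule Bochner_Integration.integrable_bound[OF int[of a b]]) (auto simp: indicator_def)
  have int_neg: "integrable lborel (\<lambda>x. max 0 (- g x) * indicator (box a b) x)" for a b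
    by (rule Bochner_Integration.integrable_bound[OF int[of a b]]) (auto simp: indicator_def)
  have "AE x in lborel. max 0 (g x) = max 0 (- g x)"
  proof (rule AE_eq_if_box_integrals_eq[OF _ _ _ _ int_pos int_neg])
    fix a b
    have "(\<integral>x. max 0 (g x) * indicator (box a b) x \<partial>lborel) - (\<integral>x. max 0 (- g x) * indicator (box a b) x \<partial>lborel)
        = (\<integral>x. max 0 (g x) * indicator (box a b) x - max 0 (- g x) * indicator (box a b) x \<partial>lborel)"
      using int_pos int_neg by (simp add: Bochner_Integration.integral_diff)
    also have "\<dots> = (\<integral>x. g x * indicator (box a b) x \<partial>lborel)"
      by (intro Bochner_Integration.integral_cong) (auto simp: indicator_def)
    finally show "(\<integral>x. max 0 (g x) * indicator (box a b) x \<partial>lborel)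
        = (\<integral>x. max 0 (- g x) * indicator (box a b) x \<partial>lborel)"
      using zero[of a b] by simp
  qed auto
  then show ?thesis by (rule AE_mp) (auto intro!: AE_I2 simp: max_def split: if_splits)
qed

lemma integrable_abs_L2_on_cbox:
  fixes g :: "real^'n::finite \<Rightarrow> real"
  assumes "L2 g"
  shows "integrable lborel (\<lambda>x. \<bar>g x\<bar> * indicator (cbox a b) x)"
proof -
  have [measurable]: "g \<in> borel_measurable lborel" and i2: "integrable lborel (\<lambda>x. (g x)\<^sup>2)"
    using assms by (auto simp: L2_def)
  have i3: "integrable lborel (\<lambda>x. indicator (cbox a b) x *\<^sub>R (g x)\<^sup>2)"
    by (rule integrable_mult_indicator[OF _ i2]) auto
  have i4: "integrable lborel (\<lambda>x. indicator (cbox a b) x :: real)"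
    using emeasure_compact_finite[OF compact_cbox[of a b]]
    by (intro integrable_real_indicator) (simp_all add: less_top[symmetric])
  show ?thesis
  proof (rule Bochner_Integration.integrable_bound[OF Bochner_Integration.integrable_add[OF i3 i4]])
    show "AE x in lborel. norm (\<bar>g x\<bar> * indicator (cbox a b) x)
        \<le> norm (indicator (cbox a b) x *\<^sub>R (g x)\<^sup>2 + indicator (cbox a b) x)"
    proof (rule AE_I2)
      fix x
      have "0 \<le> (\<bar>g x\<bar> - 1)\<^sup>2" by simp
      then have "0 \<le> \<bar>g x\<bar>\<^sup>2 - 2 * \<bar>g x\<bar> + 1" by (simp add: power2_eq_square algebra_simps)
      then have "\<bar>g x\<bar> \<le> (g x)\<^sup>2 + 1" by (simp add: power2_abs)
      then show "norm (\<bar>g x\<bar> * indicator (cbox a b) x)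
          \<le> norm (indicator (cbox a b) x *\<^sub>R (g x)\<^sup>2 + indicator (cbox a b) x)"
        by (auto simp: indicator_def)
    qed
  qed measurable
qed

lemma tendsto_integral_box_bump:
  fixes g :: "real^'n::finite \<Rightarrow> real"
  assumes L: "L2 g"
  shows "(\<lambda>j. \<integral>x. g x * box_bump (real (Suc j)) a b x \<partial>lborel) \<longlonglongrightarrow> (\<integral>x. g x * indicator (box a b) x \<partial>lborel)"
proof (rule integral_dominated_convergence[where w="\<lambda>x. \<bar>g x\<bar> * indicator (cbox a b) x"])
  show "integrable lborel (\<lambda>x. \<bar>g x\<bar> * indicator (cbox a b) x)" by (rule integrable_abs_L2_on_cbox[OF L])
  show "AE x in lborel. (\<lambda>j. g x * box_bump (real (Suc j)) a b x) \<longlonglongrightarrow> g x * indicator (box a b) x"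
    by (intro AE_I2 tendsto_mult tendsto_const box_bump_tendsto_indicator)
  show "AE x in lborel. norm (g x * box_bump (real (Suc j)) a b x) \<le> \<bar>g x\<bar> * indicator (cbox a b) x" for j
  proof (rule AE_I2)
    fix x
    show "norm (g x * box_bump (real (Suc j)) a b x) \<le> \<bar>g x\<bar> * indicator (cbox a b) x"
    proof (cases "x \<in> cbox a b")
      case True
      then show ?thesis using abs_box_bump_le_1[of "real (Suc j)" a b x]
        by (simp add: abs_mult mult_left_le)
    next
      case False
      then show ?thesis using box_bump_nonzero_imp_cbox[of "real (Suc j)" a b x] by auto
    qed
  qed
  show "(\<lambda>x. g x * box_bump (real (Suc j)) a b x) \<in> borel_measurable lborel" for j
    using L borel_measurable_continuous_onI[OF smooth_gen_continuous_on[OF smooth_gen_box_bump]]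
    by (auto simp: L2_def intro!: borel_measurable_times)
qed (use L in \<open>auto simp: L2_def\<close>)

lemma AE_zero_if_test_integrals_zero:
  fixes g :: "real^'n::finite \<Rightarrow> real"
  assumes L: "L2 g"
    and zero: "\<And>\<phi>. test_fun \<phi> \<Longrightarrow> (\<integral>x. g x * \<phi> x \<partial>lborel) = 0"
  shows "AE x in lborel. g x = 0"
proof (rule AE_zero_if_box_integrals_zero)
  show "g \<in> borel_measurable lborel" using L by (simp add: L2_def)
  show "integrable lborel (\<lambda>x. g x * indicator (box a b) x)" for a b
    by (rule Bochner_Integration.integrable_bound[OF integrable_abs_L2_on_cbox[OF L, of a b]])
       (use L in \<open>auto simp: indicator_def L2_def dest: box_subset_cbox[THEN subsetD]\<close>)
  have "(\<integral>x. g x * box_bump (real (Suc j)) a b x \<partial>lborel) = 0" for j a b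
    by (rule zero[OF test_fun_box_bump]) simp
  then show "(\<integral>x. g x * indicator (box a b) x \<partial>lborel) = 0" for a b
    using tendsto_integral_box_bump[OF L, of a b] by (simp add: LIMSEQ_const_iff)
qed

lemma L2_diff:
  assumes "L2 (g1 :: real^'n::finite \<Rightarrow> real)" "L2 g2"
  shows "L2 (\<lambda>x. g1 x - g2 x)"
proof -
  have [measurable]: "g1 \<in> borel_measurable lborel" "g2 \<in> borel_measurable lborel"
    and i: "integrable lborel (\<lambda>x. (g1 x)\<^sup>2)" "integrable lborel (\<lambda>x. (g2 x)\<^sup>2)"
    using assms by (auto simp: L2_def)
  have "integrable lborel (\<lambda>x. (g1 x - g2 x)\<^sup>2)"
  proof (rule Bochner_Integration.integrable_bound[OF Bochner_Integration.integrable_add[OF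
        integrable_mult_right[OF i(1), of 2] integrable_mult_right[OF i(2), of 2]]])
    have ineq: "(a - b)\<^sup>2 \<le> 2 * a\<^sup>2 + 2 * b\<^sup>2" for a b :: real
    proof -
      have "2 * a\<^sup>2 + 2 * b\<^sup>2 - (a - b)\<^sup>2 = (a + b)\<^sup>2" by algebra
      moreover have "(a + b)\<^sup>2 \<ge> 0" by simp
      ultimately show ?thesis by linarith
    qed
    show "AE x in lborel. norm ((g1 x - g2 x)\<^sup>2) \<le> norm (2 * (g1 x)\<^sup>2 + 2 * (g2 x)\<^sup>2)"
      by (intro AE_I2) (simp add: ineq)
  qed measurable
  then show ?thesis by (simp add: L2_def)
qed

lemma weak_deriv_unique_AE:
  fixes u g1 g2 :: "real^'n::finite \<Rightarrow> real"
  assumes w1: "weak_deriv i u g1" and w2: "weak_deriv i u g2" and L: "L2 g1" "L2 g2"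
  shows "AE x in lborel. g1 x = g2 x"
proof -
  have "AE x in lborel. g1 x - g2 x = 0"
  proof (rule AE_zero_if_test_integrals_zero[OF L2_diff[OF L]])
    fix \<phi> :: "real^'n \<Rightarrow> real" assume t: "test_fun \<phi>"
    from w1 t have a: "integrable lborel (\<lambda>x. g1 x * \<phi> x)"
      "(\<integral>x. u x * partial i \<phi> x \<partial>lborel) = - (\<integral>x. g1 x * \<phi> x \<partial>lborel)"
      by (auto simp: weak_deriv_def)
    from w2 t have b: "integrable lborel (\<lambda>x. g2 x * \<phi> x)"
      "(\<integral>x. u x * partial i \<phi> x \<partial>lborel) = - (\<integral>x. g2 x * \<phi> x \<partial>lborel)"
      by (auto simp: weak_deriv_def)
    have "(\<integral>x. (g1 x - g2 x) * \<phi> x \<partial>lborel) = (\<integral>x. g1 x * \<phi> x - g2 x * \<phi> x \<partial>lborel)"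
      by (simp add: algebra_simps)
    also have "\<dots> = 0" using a b by (simp add: Bochner_Integration.integral_diff)
    finally show "(\<integral>x. (g1 x - g2 x) * \<phi> x \<partial>lborel) = 0" .
  qed
  then show ?thesis by auto
qed

lemma test_fun_partial_measurable:
  assumes "test_fun \<phi>"
  shows "partial i \<phi> \<in> borel_measurable borel"
  using assms smooth_fun_continuous_on_partial
  by (auto simp: test_fun_def intro: borel_measurable_continuous_onI)

lemma weak_deriv_AE_cong:
  fixes u1 u2 g :: "real^'n::finite \<Rightarrow> real"
  assumes w: "weak_deriv i u1 g" and ae: "AE x in lborel. u1 x = u2 x"
    and m: "u1 \<in> borel_measurable lborel" "u2 \<in> borel_measurable lborel"
  shows "weak_deriv i u2 g"
  unfolding weak_deriv_def
proof (intro allI impI)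
  fix \<phi> :: "real^'n \<Rightarrow> real" assume t: "test_fun \<phi>"
  have [measurable]: "partial i \<phi> \<in> borel_measurable lborel" using test_fun_partial_measurable[OF t] by simp
  have [measurable]: "u1 \<in> borel_measurable lborel" "u2 \<in> borel_measurable lborel" using m by auto
  have ae2: "AE x in lborel. u1 x * partial i \<phi> x = u2 x * partial i \<phi> x" using ae by auto
  have e1: "integrable lborel (\<lambda>x. u1 x * partial i \<phi> x) = integrable lborel (\<lambda>x. u2 x * partial i \<phi> x)"
    by (rule integrable_cong_AE) (use ae2 in auto)
  have e2: "(\<integral>x. u1 x * partial i \<phi> x \<partial>lborel) = (\<integral>x. u2 x * partial i \<phi> x \<partial>lborel)"
    by (rule integral_cong_AE) (use ae2 in auto)
  from w t have w1: "integrable lborel (\<lambda>x. u1 x * partial i \<phi> x)" "integrable lborel (\<lambda>x. g x * \<phi> x)"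
     "(\<integral>x. u1 x * partial i \<phi> x \<partial>lborel) = - (\<integral>x. g x * \<phi> x \<partial>lborel)"
    unfolding weak_deriv_def by auto
  show "integrable lborel (\<lambda>x. u2 x * partial i \<phi> x) \<and> integrable lborel (\<lambda>x. g x * \<phi> x) \<and>
      (\<integral>x. u2 x * partial i \<phi> x \<partial>lborel) = - (\<integral>x. g x * \<phi> x \<partial>lborel)"
    using w1 e1 e2 by simp
qed

lemma H2_derivs_derivs:
  assumes "H2_derivs u G Hh"
  shows "H2_derivs u (fst (derivs u)) (snd (derivs u))"
  unfolding derivs_def by (rule someI[where x="(G, Hh)"]) (simp add: assms)

lemma derivs_AE_eq:
  fixes u :: "real^'n::finite \<Rightarrow> real"
  assumes H: "H2_derivs u G Hh"
  shows "\<forall>i. AE x in lborel. fst (derivs u) i x = G i x"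
    and "\<forall>i j. AE x in lborel. snd (derivs u) i j x = Hh i j x"
proof -
  note D = H2_derivs_derivs[OF H]
  show g: "\<forall>i. AE x in lborel. fst (derivs u) i x = G i x"
    using D H unfolding H2_derivs_def by (metis weak_deriv_unique_AE)
  show "\<forall>i j. AE x in lborel. snd (derivs u) i j x = Hh i j x"
  proof (intro allI)
    fix i j
    have "weak_deriv j (G i) (snd (derivs u) i j)"
      using D H g weak_deriv_AE_cong[of j "fst (derivs u) i" "snd (derivs u) i j" "G i"]
      by (auto simp: H2_derivs_def L2_def)
    then show "AE x in lborel. snd (derivs u) i j x = Hh i j x"
      using D H unfolding H2_derivs_def by (metis weak_deriv_unique_AE)
  qed
qed

lemma lap_sq_eq_if_H2_derivs:
  fixes u :: "real^'n::finite \<Rightarrow> real"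
  assumes H: "H2_derivs u G Hh"
  shows "lap_sq u = (\<integral>x. (\<Sum>i\<in>UNIV. Hh i i x)\<^sup>2 \<partial>lborel)"
  unfolding lap_sq_def lapl_def
proof (rule integral_cong_AE)
  have "AE x in lborel. \<forall>i\<in>UNIV. snd (derivs u) i i x = Hh i i x"
    using derivs_AE_eq(2)[OF H] by (subst AE_finite_all) auto
  then show "AE x in lborel. (\<Sum>i\<in>UNIV. snd (derivs u) i i x)\<^sup>2 = (\<Sum>i\<in>UNIV. Hh i i x)\<^sup>2"
    by eventually_elim simp
  show "(\<lambda>x. (\<Sum>i\<in>UNIV. snd (derivs u) i i x)\<^sup>2) \<in> borel_measurable lborel"
    using H2_derivs_derivs[OF H] by (auto simp: H2_derivs_def L2_def intro!: borel_measurable_power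
      borel_measurable_sum)
  show "(\<lambda>x. (\<Sum>i\<in>UNIV. Hh i i x)\<^sup>2) \<in> borel_measurable lborel"
    using H by (auto simp: H2_derivs_def L2_def intro!: borel_measurable_power borel_measurable_sum)
qed

lemma grad_sq_eq_if_H2_derivs:
  fixes u :: "real^'n::finite \<Rightarrow> real"
  assumes H: "H2_derivs u G Hh"
  shows "grad_sq u = (\<Sum>i\<in>UNIV. \<integral>x. (G i x)\<^sup>2 \<partial>lborel)"
  unfolding grad_sq_def
proof (rule sum.cong[OF refl], rule integral_cong_AE)
  fix i
  show "AE x in lborel. (fst (derivs u) i x)\<^sup>2 = (G i x)\<^sup>2"
    using derivs_AE_eq(1)[OF H] by (metis (mono_tags, lifting) AE_mp AE_I2)
  show "(\<lambda>x. (fst (derivs u) i x)\<^sup>2) \<in> borel_measurable lborel"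
    using H2_derivs_derivs[OF H] by (auto simp: H2_derivs_def L2_def intro!: borel_measurable_power)
  show "(\<lambda>x. (G i x)\<^sup>2) \<in> borel_measurable lborel"
    using H by (auto simp: H2_derivs_def L2_def intro!: borel_measurable_power)
qed


section \<open>Radial functions\<close>

lemma L2_vanishing_outside_ball:
  fixes f :: "real^'n::finite \<Rightarrow> real"
  assumes "continuous_on UNIV f" "\<And>x. norm x > \<rho> \<Longrightarrow> f x = 0"
  shows "L2 f"
  unfolding L2_def
proof
  show "f \<in> borel_measurable lborel" using assms(1) by (simp add: borel_measurable_continuous_onI)
  show "integrable lborel (\<lambda>x. (f x)\<^sup>2)"
    by (rule integrable_vanishing_outside_ball[where \<rho>=\<rho>]) (use assms in \<open>auto intro!: continuous_intros\<close>)
qed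

definition C2_profile :: "(real \<Rightarrow> real) \<Rightarrow> (real \<Rightarrow> real) \<Rightarrow> (real \<Rightarrow> real) \<Rightarrow> real \<Rightarrow> bool" where
  "C2_profile F F1 F2 T \<longleftrightarrow> (\<forall>t. (F has_real_derivative F1 t) (at t)) \<and> (\<forall>t. (F1 has_real_derivative F2 t) (at t))
     \<and> continuous_on UNIV F2 \<and> (\<forall>t\<ge>T. F t = 0 \<and> F1 t = 0 \<and> F2 t = 0)"

lemma C2_profile_continuous_on:
  assumes "C2_profile F F1 F2 T"
  shows "continuous_on UNIV F" "continuous_on UNIV F1" "continuous_on UNIV F2"
  using assms unfolding C2_profile_def
  by (meson DERIV_isCont continuous_at_imp_continuous_on)+

lemma inner_self_ge_if_norm_gt:
  fixes x :: "real^'n::finite"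
  assumes "norm x > sqrt \<bar>T\<bar>"
  shows "x \<bullet> x \<ge> T"
proof -
  have "sqrt \<bar>T\<bar> ^ 2 < norm x ^ 2" using assms by (intro power_strict_mono) auto
  then show ?thesis by (simp add: power2_norm_eq_inner)
qed

lemma C2_profile_vanishing:
  fixes x :: "real^'n::finite"
  assumes "C2_profile F F1 F2 T" "norm x > sqrt \<bar>T\<bar>"
  shows "F (x \<bullet> x) = 0" "F1 (x \<bullet> x) = 0" "F2 (x \<bullet> x) = 0"
  using assms inner_self_ge_if_norm_gt[OF assms(2)] by (auto simp: C2_profile_def)

lemma continuous_on_radial:
  assumes "continuous_on UNIV (F :: real \<Rightarrow> real)"
  shows "continuous_on UNIV (\<lambda>x::real^'n::finite. F (x \<bullet> x))"
  by (rule continuous_on_compose2[OF assms]) (auto intro!: continuous_intros)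

lemma integrable_radial:
  fixes F :: "real \<Rightarrow> real"
  assumes "continuous_on UNIV F" "\<And>t. t \<ge> T \<Longrightarrow> F t = 0"
  shows "integrable lborel (\<lambda>x::real^'n::finite. F (x \<bullet> x))"
  by (rule integrable_vanishing_outside_ball[where \<rho>="sqrt \<bar>T\<bar>"])
     (use assms continuous_on_radial inner_self_ge_if_norm_gt in blast)+

lemma DERIV_line_inner_self:
  fixes x :: "real^'n::finite"
  shows "((\<lambda>t. (x + t *\<^sub>R axis j 1) \<bullet> (x + t *\<^sub>R axis j 1)) has_real_derivative 2 * x$j) (at 0)"
proof -
  have eq: "(\<lambda>t. (x + t *\<^sub>R axis j 1) \<bullet> (x + t *\<^sub>R axis j 1)) = (\<lambda>t. x \<bullet> x + 2 * t * x$j + t * t)"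
    by (rule ext)
       (simp add: inner_add_left inner_add_right inner_axis inner_commute[of "axis j 1" x] algebra_simps)
  show ?thesis unfolding eq by (auto intro!: derivative_eq_intros)
qed

lemma DERIV_line_radial:
  fixes x :: "real^'n::finite"
  assumes "\<And>t. (F has_real_derivative F1 t) (at t)"
  shows "((\<lambda>t. F ((x + t *\<^sub>R axis j 1) \<bullet> (x + t *\<^sub>R axis j 1))) has_real_derivative F1 (x \<bullet> x) * (2 * x$j)) (at 0)"
  using DERIV_chain2[OF assms DERIV_line_inner_self[of x j]] by simp

lemma DERIV_line_nth:
  fixes x :: "real^'n::finite"
  shows "((\<lambda>t. (x + t *\<^sub>R axis j 1)$i) has_real_derivative (if i = j then 1 else 0)) (at 0)"
  by (simp add: line_nth axis_def) (auto intro!: derivative_eq_intros)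

definition radial_grad :: "(real \<Rightarrow> real) \<Rightarrow> 'n::finite \<Rightarrow> real^'n \<Rightarrow> real" where
  "radial_grad F1 i x = 2 * F1 (x \<bullet> x) * x$i"

definition radial_hess :: "(real \<Rightarrow> real) \<Rightarrow> (real \<Rightarrow> real) \<Rightarrow> 'n::finite \<Rightarrow> 'n \<Rightarrow> real^'n \<Rightarrow> real" where
  "radial_hess F1 F2 i j x = 4 * F2 (x \<bullet> x) * x$i * x$j + 2 * F1 (x \<bullet> x) * (if i = j then 1 else 0)"

lemma H2_derivs_radial:
  assumes P: "C2_profile F F1 F2 T"
  shows "H2_derivs (\<lambda>x::real^'n::finite. F (x \<bullet> x)) (radial_grad F1) (radial_hess F1 F2)"
proof -
  have dF: "\<And>t. (F has_real_derivative F1 t) (at t)" and dF1: "\<And>t. (F1 has_real_derivative F2 t) (at t)"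
    using P by (auto simp: C2_profile_def)
  note c = C2_profile_continuous_on[OF P, THEN continuous_on_radial[where 'n='n]]
  note z = C2_profile_vanishing[OF P]
  have cG: "continuous_on UNIV (radial_grad F1 i :: real^'n \<Rightarrow> real)" for i
    unfolding radial_grad_def[abs_def] using c by (auto intro!: continuous_intros)
  have cH: "continuous_on UNIV (radial_hess F1 F2 i j :: real^'n \<Rightarrow> real)" for i j
    unfolding radial_hess_def[abs_def] using c by (auto intro!: continuous_intros)
  have zG: "radial_grad F1 i x = 0" if "norm x > sqrt \<bar>T\<bar>" for x :: "real^'n" and i
    using z(2)[OF that] by (simp add: radial_grad_def)
  have zH: "radial_hess F1 F2 i j x = 0" if "norm x > sqrt \<bar>T\<bar>" for x :: "real^'n" and i j
    using z(2,3)[OF that] by (simp add: radial_hess_def)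
  have wG: "weak_deriv i (\<lambda>x::real^'n. F (x \<bullet> x)) (radial_grad F1 i)" for i :: 'n
  proof (rule weak_deriv_vanishing_outside_ball[OF c(1) cG])
    show "((\<lambda>t. F ((x + t *\<^sub>R axis i 1) \<bullet> (x + t *\<^sub>R axis i 1))) has_real_derivative radial_grad F1 i x) (at 0)"
      for x :: "real^'n"
      using DERIV_line_radial[OF dF, of x i] by (simp add: radial_grad_def mult.commute mult.left_commute)
  qed (use z zG in blast)
  have wH: "weak_deriv j (radial_grad F1 i) (radial_hess F1 F2 i j :: real^'n \<Rightarrow> real)" for i j :: 'n
  proof (rule weak_deriv_vanishing_outside_ball[OF cG[of i] cH[of i j]])
    show "((\<lambda>t. radial_grad F1 i (x + t *\<^sub>R axis j 1)) has_real_derivative radial_hess F1 F2 i j x) (at 0)"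
      for x :: "real^'n"
    proof -
      have "((\<lambda>t. 2 * F1 ((x + t *\<^sub>R axis j 1) \<bullet> (x + t *\<^sub>R axis j 1)) * (x + t *\<^sub>R axis j 1)$i)
          has_real_derivative 2 * (F2 (x \<bullet> x) * (2 * x$j)) * (x + 0 *\<^sub>R axis j 1)$i
            + (if i = j then 1 else 0) * (2 * F1 ((x + 0 *\<^sub>R axis j 1) \<bullet> (x + 0 *\<^sub>R axis j 1)))) (at 0)"
        by (intro DERIV_mult DERIV_cmult DERIV_line_radial[OF dF1] DERIV_line_nth)
      then show ?thesis by (simp add: radial_grad_def radial_hess_def algebra_simps)
    qed
  qed (use zG zH in blast)
  show ?thesis unfolding H2_derivs_def
    using wG wH L2_vanishing_outside_ball[OF cG zG] L2_vanishing_outside_ball[OF cH zH] by blast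
qed

lemma H2r_radial:
  assumes P: "C2_profile F F1 F2 T"
  shows "H2r (\<lambda>x::real^'n::finite. F (x \<bullet> x))"
  unfolding H2r_def H2_def radial_def
proof (intro conjI exI)
  show "L2 (\<lambda>x::real^'n. F (x \<bullet> x))"
    by (rule L2_vanishing_outside_ball[OF continuous_on_radial[OF C2_profile_continuous_on(1)[OF P]]])
       (use C2_profile_vanishing[OF P] in blast)
  show "H2_derivs (\<lambda>x::real^'n. F (x \<bullet> x)) (radial_grad F1) (radial_hess F1 F2)"
    by (rule H2_derivs_radial[OF P])
  show "AE x in lborel. F (x \<bullet> x) = (\<lambda>r. F (r\<^sup>2)) (norm x)"
    by (simp add: power2_norm_eq_inner)
qed

lemma lap_sq_radial:
  assumes "C2_profile F F1 F2 T"
  shows "lap_sq (\<lambda>x::real^'n::finite. F (x \<bullet> x))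
    = (\<integral>x. (4 * F2 (x \<bullet> x) * (x \<bullet> x) + 2 * real CARD('n) * F1 (x \<bullet> x))\<^sup>2 \<partial>(lborel::(real^'n) measure))"
proof -
  have "(\<Sum>i\<in>UNIV. radial_hess F1 F2 i i x) = 4 * F2 (x \<bullet> x) * (x \<bullet> x) + 2 * real CARD('n) * F1 (x \<bullet> x)"
    for x :: "real^'n"
    by (simp add: radial_hess_def sum.distrib inner_vec_def sum_distrib_left power2_eq_square mult.assoc)
  then show ?thesis by (simp add: lap_sq_eq_if_H2_derivs[OF H2_derivs_radial[OF assms]])
qed

lemma grad_sq_radial:
  assumes P: "C2_profile F F1 F2 T"
  shows "grad_sq (\<lambda>x::real^'n::finite. F (x \<bullet> x))
    = (\<integral>x. 4 * (F1 (x \<bullet> x))\<^sup>2 * (x \<bullet> x) \<partial>(lborel::(real^'n) measure))"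
proof -
  note H = H2_derivs_radial[OF P, where 'n='n]
  have "grad_sq (\<lambda>x::real^'n. F (x \<bullet> x)) = (\<integral>x. (\<Sum>i\<in>UNIV. (radial_grad F1 i x)\<^sup>2) \<partial>(lborel::(real^'n) measure))"
    unfolding grad_sq_eq_if_H2_derivs[OF H]
    by (rule Bochner_Integration.integral_sum[where f="\<lambda>i x. (radial_grad F1 i x)\<^sup>2", symmetric])
      (use H in \<open>auto simp: H2_derivs_def L2_def\<close>)
  also have "(\<lambda>x. \<Sum>i\<in>UNIV. (radial_grad F1 i x)\<^sup>2) = (\<lambda>x::real^'n. 4 * (F1 (x \<bullet> x))\<^sup>2 * (x \<bullet> x))"
  proof
    fix x :: "real^'n"
    have "(\<Sum>i\<in>UNIV. (radial_grad F1 i x)\<^sup>2) = (\<Sum>i\<in>UNIV. (4 * (F1 (x \<bullet> x))\<^sup>2) * (x$i * x$i))"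
      by (simp add: radial_grad_def power2_eq_square algebra_simps)
    also have "\<dots> = 4 * (F1 (x \<bullet> x))\<^sup>2 * (x \<bullet> x)"
      by (simp only: sum_distrib_left[symmetric]) (simp add: inner_vec_def)
    finally show "(\<Sum>i\<in>UNIV. (radial_grad F1 i x)\<^sup>2) = 4 * (F1 (x \<bullet> x))\<^sup>2 * (x \<bullet> x)" .
  qed
  finally show ?thesis .
qed


section \<open>Bumps supported in disjoint shells\<close>

definition pos_pow :: "nat \<Rightarrow> real \<Rightarrow> real" where "pos_pow k y = (max 0 y) ^ k"

lemma DERIV_pos_pow:
  assumes "k \<ge> 2"
  shows "(pos_pow k has_real_derivative real k * pos_pow (k - 1) y) (at y)"
proof (rule DERIV_vanishing_left)
  fix y :: real assume y: "y > 0"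
  have "((\<lambda>y. y ^ k) has_real_derivative real k * pos_pow (k - 1) y) (at y)"
    using DERIV_pow[of k y] y by (simp add: pos_pow_def)
  then show "(pos_pow k has_real_derivative real k * pos_pow (k - 1) y) (at y)"
    by (rule has_field_derivative_transform_within_open[where S="{0<..}"]) (use y in \<open>auto simp: pos_pow_def\<close>)
next
  obtain j where j: "k = Suc j" "j \<ge> 1" using assms by (metis Suc_le_D Suc_le_mono one_add_one plus_1_eq_Suc)
  have "((\<lambda>y::real. y ^ j) \<longlongrightarrow> 0) (at_right 0)"
    using j(2) by (intro tendsto_eq_intros) auto
  moreover have "\<forall>\<^sub>F y in at_right 0. y ^ j = pos_pow k y / y"
    by (rule eventually_mono[OF eventually_at_right_less]) (simp add: pos_pow_def j(1))
  ultimately show "((\<lambda>y. pos_pow k y / y) \<longlongrightarrow> 0) (at_right 0)"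
    by (rule Lim_transform_eventually)
qed (use assms in \<open>simp_all add: pos_pow_def\<close>)

lemma continuous_on_pos_pow_1: "continuous_on UNIV (pos_pow 1)"
  unfolding pos_pow_def[abs_def] by (auto intro!: continuous_intros)

lemma pos_pow_nonpos: "y \<le> 0 \<Longrightarrow> k > 0 \<Longrightarrow> pos_pow k y = 0"
  by (simp add: pos_pow_def)

definition shell_lo :: "nat \<Rightarrow> real" where "shell_lo k = 3 * real k + 1"
definition shell_hi :: "nat \<Rightarrow> real" where "shell_hi k = 3 * real k + 2"
definition shell_quad :: "nat \<Rightarrow> real \<Rightarrow> real" where "shell_quad k t = (t - shell_lo k) * (shell_hi k - t)"
definition shell_quad' :: "nat \<Rightarrow> real \<Rightarrow> real" where "shell_quad' k t = shell_lo k + shell_hi k - 2 * t"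

definition shell_bump :: "nat \<Rightarrow> real \<Rightarrow> real" where "shell_bump k t = pos_pow 3 (shell_quad k t)"
definition shell_bump' :: "nat \<Rightarrow> real \<Rightarrow> real" where
  "shell_bump' k t = 3 * pos_pow 2 (shell_quad k t) * shell_quad' k t"
definition shell_bump'' :: "nat \<Rightarrow> real \<Rightarrow> real" where
  "shell_bump'' k t = 6 * pos_pow 1 (shell_quad k t) * (shell_quad' k t)\<^sup>2 - 6 * pos_pow 2 (shell_quad k t)"

lemma DERIV_shell_quad: "(shell_quad k has_real_derivative shell_quad' k t) (at t)"
  unfolding shell_quad_def[abs_def] shell_quad'_def by (auto intro!: derivative_eq_intros simp: algebra_simps)

lemma DERIV_shell_quad': "(shell_quad' k has_real_derivative -2) (at t)"
  unfolding shell_quad'_def[abs_def] by (auto intro!: derivative_eq_intros)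

lemma DERIV_shell_bump: "(shell_bump k has_real_derivative shell_bump' k t) (at t)"
proof -
  have "((\<lambda>t. pos_pow 3 (shell_quad k t))
      has_real_derivative real 3 * pos_pow (3 - 1) (shell_quad k t) * shell_quad' k t) (at t)"
    by (rule DERIV_chain2[OF DERIV_pos_pow DERIV_shell_quad]) simp
  then show ?thesis by (simp add: shell_bump_def[abs_def] shell_bump'_def)
qed

lemma DERIV_shell_bump': "(shell_bump' k has_real_derivative shell_bump'' k t) (at t)"
proof -
  have d2: "((\<lambda>t. pos_pow 2 (shell_quad k t))
      has_real_derivative real 2 * pos_pow (2 - 1) (shell_quad k t) * shell_quad' k t) (at t)"
    by (rule DERIV_chain2[OF DERIV_pos_pow DERIV_shell_quad]) simp
  have "((\<lambda>t. 3 * pos_pow 2 (shell_quad k t) * shell_quad' k t) has_real_derivative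
      3 * (real 2 * pos_pow (2 - 1) (shell_quad k t) * shell_quad' k t) * shell_quad' k t
        + (-2) * (3 * pos_pow 2 (shell_quad k t))) (at t)"
    by (intro DERIV_mult DERIV_cmult d2 DERIV_shell_quad')
  then show ?thesis by (simp add: shell_bump'_def[abs_def] shell_bump''_def power2_eq_square algebra_simps)
qed

lemma continuous_on_shell_bump'': "continuous_on UNIV (shell_bump'' k)"
proof -
  have c1: "continuous_on UNIV (\<lambda>t. pos_pow 1 (shell_quad k t))"
    by (rule continuous_on_compose2[OF continuous_on_pos_pow_1])
       (auto simp: shell_quad_def intro!: continuous_intros)
  have c2: "continuous_on UNIV (\<lambda>t. pos_pow 2 (shell_quad k t))"
    using DERIV_pos_pow[of 2] DERIV_shell_quad
    by (intro continuous_at_imp_continuous_on ballI DERIV_isCont)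
       (rule DERIV_chain2[OF DERIV_pos_pow DERIV_shell_quad], simp)
  show ?thesis unfolding shell_bump''_def[abs_def] shell_quad'_def using c1 c2 by (auto intro!: continuous_intros)
qed

lemma shell_bump_outside:
  assumes "\<not> (shell_lo k < t \<and> t < shell_hi k)"
  shows "shell_bump k t = 0" "shell_bump' k t = 0" "shell_bump'' k t = 0"
proof -
  have ab: "shell_lo k < shell_hi k" by (simp add: shell_lo_def shell_hi_def)
  have "shell_quad k t \<le> 0"
  proof (cases "t \<le> shell_lo k")
    case True
    then show ?thesis unfolding shell_quad_def using ab by (intro mult_nonpos_nonneg) auto
  next
    case False
    then have "shell_hi k \<le> t" using assms by auto
    then show ?thesis unfolding shell_quad_def using False by (intro mult_nonneg_nonpos) auto
  qed
  then show "shell_bump k t = 0" "shell_bump' k t = 0" "shell_bump'' k t = 0"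
    by (auto simp: shell_bump_def shell_bump'_def shell_bump''_def pos_pow_nonpos)
qed

lemma shell_bump_pos: "shell_bump k (shell_lo k + 1/2) > 0"
  by (simp add: shell_bump_def pos_pow_def shell_quad_def shell_lo_def shell_hi_def)

lemma lborel_integral_scale:
  fixes f :: "real^'n::finite \<Rightarrow> real"
  assumes [measurable]: "f \<in> borel_measurable borel" and R: "R > 0"
  shows "(\<integral>x. f x \<partial>lborel) = R ^ CARD('n) * (\<integral>x. f (R *\<^sub>R x) \<partial>lborel)"
proof -
  have L: "(lborel :: (real^'n) measure)
      = density (distr lborel borel (\<lambda>x. 0 + R *\<^sub>R x)) (\<lambda>_. ennreal (R ^ CARD('n)))"
    using lborel_affine[of R "0::real^'n"] R by simp
  have "(\<integral>x. f x \<partial>lborel)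
      = (\<integral>x. f x \<partial>(density (distr lborel borel (\<lambda>x. 0 + R *\<^sub>R x)) (\<lambda>_. ennreal (R ^ CARD('n)))))"
    by (subst L[symmetric]) simp
  also have "\<dots> = (\<integral>x. R ^ CARD('n) *\<^sub>R f x \<partial>(distr lborel borel (\<lambda>x::real^'n. 0 + R *\<^sub>R x)))"
    by (rule integral_density) (use R in auto)
  also have "\<dots> = (\<integral>x. R ^ CARD('n) *\<^sub>R f (0 + R *\<^sub>R x) \<partial>lborel)"
    by (rule integral_distr) auto
  also have "\<dots> = R ^ CARD('n) * (\<integral>x. f (R *\<^sub>R x) \<partial>lborel)"
    by simp
  finally show ?thesis .
qed

lemma disjoint_support_sum:
  assumes "finite S" "h 0 = 0" "\<And>k l. k \<in> S \<Longrightarrow> l \<in> S \<Longrightarrow> f k \<noteq> 0 \<Longrightarrow> f l \<noteq> 0 \<Longrightarrow> k = l"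
  shows "h (\<Sum>k\<in>S. f k) = (\<Sum>k\<in>S. h (f k))"
proof (cases "\<exists>j\<in>S. f j \<noteq> 0")
  case True
  then obtain j where j: "j \<in> S" "f j \<noteq> 0" by blast
  have z: "f k = 0" if "k \<in> S - {j}" for k using assms(3)[of k j] that j by auto
  have "(\<Sum>k\<in>S. f k) = f j + (\<Sum>k\<in>S - {j}. f k)" by (rule sum.remove[OF assms(1) j(1)])
  also have "(\<Sum>k\<in>S - {j}. f k) = 0" using z by simp
  finally have 1: "(\<Sum>k\<in>S. f k) = f j" by simp
  have "(\<Sum>k\<in>S. h (f k)) = h (f j) + (\<Sum>k\<in>S - {j}. h (f k))" by (rule sum.remove[OF assms(1) j(1)])
  also have "(\<Sum>k\<in>S - {j}. h (f k)) = 0" using z assms(2) by simp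
  finally show ?thesis using 1 by simp
next
  case False
  then show ?thesis using assms(2) by simp
qed

lemma shells_disjoint: "shell_lo k < t \<Longrightarrow> t < shell_hi k \<Longrightarrow> shell_lo l < t \<Longrightarrow> t < shell_hi l \<Longrightarrow> k = l"
proof (rule ccontr)
  assume *: "shell_lo k < t" "t < shell_hi k" "shell_lo l < t" "t < shell_hi l" "k \<noteq> l"
  show False
  proof (cases "k < l")
    case True
    then have "real k + 1 \<le> real l" by simp
    then show False using * by (simp add: shell_lo_def shell_hi_def)
  next
    case False
    then have "real l + 1 \<le> real k" using *(5) by simp
    then show False using * by (simp add: shell_lo_def shell_hi_def)
  qed
qed

lemma integral_shell_sum:
  fixes \<Psi> :: "nat \<Rightarrow> real \<Rightarrow> real" and h w :: "real \<Rightarrow> real"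
  assumes c\<Psi>: "\<And>k. continuous_on UNIV (\<Psi> k)" and s\<Psi>: "\<And>k t. \<not> (shell_lo k < t \<and> t < shell_hi k) \<Longrightarrow> \<Psi> k t = 0"
    and ch: "continuous_on UNIV h" and h0: "h 0 = 0" and cw: "continuous_on UNIV w" and R: "R > 0"
  shows "(\<integral>x. h (\<Sum>k<m. \<Psi> k ((x \<bullet> x) / R\<^sup>2)) * w ((x \<bullet> x) / R\<^sup>2) \<partial>(lborel::(real^'n::finite) measure))
       = (\<Sum>k<m. R ^ CARD('n) * (\<integral>x. h (\<Psi> k (x \<bullet> x)) * w (x \<bullet> x) \<partial>(lborel::(real^'n) measure)))"
proof -
  have pointwise: "h (\<Sum>k<m. \<Psi> k \<tau>) * w \<tau> = (\<Sum>k<m. h (\<Psi> k \<tau>) * w \<tau>)" for \<tau>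
  proof -
    have "h (\<Sum>k<m. \<Psi> k \<tau>) = (\<Sum>k<m. h (\<Psi> k \<tau>))"
      by (rule disjoint_support_sum) (use h0 s\<Psi> shells_disjoint in blast)+
    then show ?thesis by (simp add: sum_distrib_right)
  qed
  have cont: "continuous_on UNIV (\<lambda>t. h (\<Psi> k t) * w t)" for k
    by (intro continuous_intros continuous_on_compose2[OF ch c\<Psi>] cw) auto
  have outside: "t \<ge> shell_hi k \<Longrightarrow> h (\<Psi> k t) * w t = 0" for k t using s\<Psi> h0 by simp
  have "(\<integral>x. h (\<Sum>k<m. \<Psi> k ((x \<bullet> x) / R\<^sup>2)) * w ((x \<bullet> x) / R\<^sup>2) \<partial>(lborel::(real^'n) measure))
      = (\<integral>x. (\<Sum>k<m. h (\<Psi> k ((x \<bullet> x) / R\<^sup>2)) * w ((x \<bullet> x) / R\<^sup>2)) \<partial>(lborel::(real^'n) measure))"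
    by (simp add: pointwise)
  also have "\<dots> = (\<Sum>k<m. (\<integral>x. h (\<Psi> k ((x \<bullet> x) / R\<^sup>2)) * w ((x \<bullet> x) / R\<^sup>2) \<partial>(lborel::(real^'n) measure)))"
  proof (rule Bochner_Integration.integral_sum, simp)
    fix k
    show "integrable lborel (\<lambda>x::real^'n. h (\<Psi> k ((x \<bullet> x) / R\<^sup>2)) * w ((x \<bullet> x) / R\<^sup>2))"
    proof (rule integrable_radial[where F="\<lambda>t. h (\<Psi> k (t / R\<^sup>2)) * w (t / R\<^sup>2)" and T="R\<^sup>2 * shell_hi k"])
      show "continuous_on UNIV (\<lambda>t. h (\<Psi> k (t / R\<^sup>2)) * w (t / R\<^sup>2))"
        by (rule continuous_on_compose2[OF cont]) (use R in \<open>auto intro!: continuous_intros\<close>)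
      fix t assume "R\<^sup>2 * shell_hi k \<le> t"
      then have "shell_hi k \<le> t / R\<^sup>2" using R by (simp add: field_simps)
      then show "h (\<Psi> k (t / R\<^sup>2)) * w (t / R\<^sup>2) = 0" by (rule outside)
    qed
  qed
  also have "\<dots> = (\<Sum>k<m. R ^ CARD('n) * (\<integral>x. h (\<Psi> k (x \<bullet> x)) * w (x \<bullet> x) \<partial>(lborel::(real^'n) measure)))"
  proof (rule sum.cong[OF refl])
    fix k
    have m: "(\<lambda>x::real^'n. h (\<Psi> k ((x \<bullet> x) / R\<^sup>2)) * w ((x \<bullet> x) / R\<^sup>2)) \<in> borel_measurable borel"
      by (rule borel_measurable_continuous_onI, rule continuous_on_compose2[OF cont])
         (use R in \<open>auto intro!: continuous_intros\<close>)
    have e: "((R *\<^sub>R x) \<bullet> (R *\<^sub>R x)) / R\<^sup>2 = x \<bullet> x" for x :: "real^'n"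
      using R by (simp add: power2_eq_square)
    show "(\<integral>x. h (\<Psi> k ((x \<bullet> x) / R\<^sup>2)) * w ((x \<bullet> x) / R\<^sup>2) \<partial>(lborel::(real^'n) measure))
        = R ^ CARD('n) * (\<integral>x. h (\<Psi> k (x \<bullet> x)) * w (x \<bullet> x) \<partial>(lborel::(real^'n) measure))"
      using lborel_integral_scale[OF m R] by (simp only: e)
  qed
  finally show ?thesis .
qed

definition shell_comb :: "nat \<Rightarrow> (nat \<Rightarrow> real) \<Rightarrow> real \<Rightarrow> real \<Rightarrow> real" where
  "shell_comb m d R t = (\<Sum>k<m. d k * shell_bump k (t / R\<^sup>2))"
definition shell_comb' :: "nat \<Rightarrow> (nat \<Rightarrow> real) \<Rightarrow> real \<Rightarrow> real \<Rightarrow> real" where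
  "shell_comb' m d R t = (\<Sum>k<m. d k * shell_bump' k (t / R\<^sup>2) / R\<^sup>2)"
definition shell_comb'' :: "nat \<Rightarrow> (nat \<Rightarrow> real) \<Rightarrow> real \<Rightarrow> real \<Rightarrow> real" where
  "shell_comb'' m d R t = (\<Sum>k<m. d k * shell_bump'' k (t / R\<^sup>2) / R ^ 4)"

lemma continuous_on_shell_bump: "continuous_on UNIV (shell_bump k)"
  using DERIV_shell_bump by (meson DERIV_isCont continuous_at_imp_continuous_on)
lemma continuous_on_shell_bump': "continuous_on UNIV (shell_bump' k)"
  using DERIV_shell_bump' by (meson DERIV_isCont continuous_at_imp_continuous_on)

lemma C2_profile_shell_comb:
  assumes R: "R > 0"
  shows "C2_profile (shell_comb m d R) (shell_comb' m d R) (shell_comb'' m d R) (R\<^sup>2 * shell_hi m)"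
proof -
  have sc: "((\<lambda>t. t / R\<^sup>2) has_real_derivative 1 / R\<^sup>2) (at t)" for t
    using DERIV_cdivide[OF DERIV_ident, of "R\<^sup>2" t] by simp
  have d1: "(shell_comb m d R has_real_derivative shell_comb' m d R t) (at t)" for t
  proof -
    have "((\<lambda>t. \<Sum>k<m. d k * shell_bump k (t / R\<^sup>2))
        has_real_derivative (\<Sum>k<m. d k * (shell_bump' k (t / R\<^sup>2) * (1 / R\<^sup>2)))) (at t)"
      by (intro DERIV_sum DERIV_cmult DERIV_chain2[OF DERIV_shell_bump sc])
    then show ?thesis unfolding shell_comb_def[abs_def] shell_comb'_def by simp
  qed
  have d2: "(shell_comb' m d R has_real_derivative shell_comb'' m d R t) (at t)" for t
  proof -
    have "((\<lambda>t. \<Sum>k<m. d k * shell_bump' k (t / R\<^sup>2) / R\<^sup>2)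
        has_real_derivative (\<Sum>k<m. d k * (shell_bump'' k (t / R\<^sup>2) * (1 / R\<^sup>2)) / R\<^sup>2)) (at t)"
      by (intro DERIV_sum DERIV_cdivide DERIV_cmult DERIV_chain2[OF DERIV_shell_bump' sc])
    then show ?thesis
      unfolding shell_comb'_def[abs_def] shell_comb''_def by (simp add: power4_eq_xxxx power2_eq_square mult.assoc)
  qed
  have c: "continuous_on UNIV (shell_comb'' m d R)"
    unfolding shell_comb''_def[abs_def]
    by (intro continuous_intros continuous_on_compose2[OF continuous_on_shell_bump'']) (use R in auto)
  have z: "shell_comb m d R t = 0 \<and> shell_comb' m d R t = 0 \<and> shell_comb'' m d R t = 0"
    if t: "R\<^sup>2 * shell_hi m \<le> t" for t
  proof -
    have "\<not> (shell_lo k < t / R\<^sup>2 \<and> t / R\<^sup>2 < shell_hi k)" if "k < m" for k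
    proof -
      have "shell_hi k \<le> shell_hi m" using that by (simp add: shell_hi_def)
      moreover have "shell_hi m \<le> t / R\<^sup>2" using t R by (simp add: field_simps)
      ultimately show ?thesis by simp
    qed
    then show ?thesis by (simp add: shell_comb_def shell_comb'_def shell_comb''_def shell_bump_outside)
  qed
  show ?thesis unfolding C2_profile_def using d1 d2 c z by blast
qed


definition shell_L2 :: "'n::finite itself \<Rightarrow> nat \<Rightarrow> real" where
  "shell_L2 _ k = (\<integral>x. (shell_bump k (x \<bullet> x))\<^sup>2 \<partial>(lborel::(real^'n) measure))"

definition shell_lapl :: "'n::finite itself \<Rightarrow> nat \<Rightarrow> real \<Rightarrow> real" where
  "shell_lapl _ k t = 4 * shell_bump'' k t * t + 2 * real CARD('n) * shell_bump' k t"

definition shell_lap :: "'n::finite itself \<Rightarrow> nat \<Rightarrow> real" where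
  "shell_lap T k = (\<integral>x. (shell_lapl T k (x \<bullet> x))\<^sup>2 \<partial>(lborel::(real^'n) measure))"

definition shell_grad :: "'n::finite itself \<Rightarrow> nat \<Rightarrow> real" where
  "shell_grad _ k = (\<integral>x. (shell_bump' k (x \<bullet> x))\<^sup>2 * (4 * (x \<bullet> x)) \<partial>(lborel::(real^'n) measure))"

definition shell_Lp :: "'n::finite itself \<Rightarrow> real \<Rightarrow> nat \<Rightarrow> real" where
  "shell_Lp _ q k = (\<integral>x. \<bar>shell_bump k (x \<bullet> x)\<bar> powr q \<partial>(lborel::(real^'n) measure))"

lemma H2r_shell_comb:
  assumes "R > 0"
  shows "H2r (\<lambda>x::real^'n::finite. shell_comb m d R (x \<bullet> x))"
  by (rule H2r_radial[OF C2_profile_shell_comb[OF assms]])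

lemma L2_sq_shell_comb:
  assumes R: "R > 0"
  shows "L2_sq (\<lambda>x::real^'n::finite. shell_comb m d R (x \<bullet> x))
    = (\<Sum>k<m. R ^ CARD('n) * ((d k)\<^sup>2 * shell_L2 TYPE('n) k))"
proof -
  have "L2_sq (\<lambda>x::real^'n. shell_comb m d R (x \<bullet> x))
      = (\<integral>x. (\<Sum>k<m. d k * shell_bump k ((x \<bullet> x) / R\<^sup>2))\<^sup>2 * 1 \<partial>(lborel::(real^'n) measure))"
    by (simp add: L2_sq_def shell_comb_def)
  also have "\<dots> = (\<Sum>k<m. R ^ CARD('n) * (\<integral>x. (d k * shell_bump k (x \<bullet> x))\<^sup>2 * 1 \<partial>(lborel::(real^'n) measure)))"
    by (rule integral_shell_sum[where \<Psi>="\<lambda>k t. d k * shell_bump k t" and h="\<lambda>y. y\<^sup>2" and w="\<lambda>_. 1"])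
       (auto intro!: continuous_intros continuous_on_compose2[OF continuous_on_shell_bump]
         simp: shell_bump_outside R)
  also have "\<dots> = (\<Sum>k<m. R ^ CARD('n) * ((d k)\<^sup>2 * shell_L2 TYPE('n) k))"
    by (simp add: shell_L2_def power_mult_distrib)
  finally show ?thesis .
qed

lemma lap_sq_shell_comb:
  assumes R: "R > 0"
  shows "lap_sq (\<lambda>x::real^'n::finite. shell_comb m d R (x \<bullet> x))
    = (\<Sum>k<m. R ^ CARD('n) * ((d k)\<^sup>2 / R ^ 4 * shell_lap TYPE('n) k))"
proof -
  have nN: "R\<^sup>2 \<noteq> 0" using R by simp
  have profile: "4 * shell_comb'' m d R t * t + 2 * real CARD('n) * shell_comb' m d R t
      = (\<Sum>k<m. d k * shell_lapl TYPE('n) k (t / R\<^sup>2) / R\<^sup>2)" for t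
  proof -
    have "t = R\<^sup>2 * (t / R\<^sup>2)" using nN by simp
    then have "4 * shell_comb'' m d R t * t + 2 * real CARD('n) * shell_comb' m d R t
       = (\<Sum>k<m. 4 * (d k * shell_bump'' k (t / R\<^sup>2) / R ^ 4) * (R\<^sup>2 * (t / R\<^sup>2))
           + 2 * real CARD('n) * (d k * shell_bump' k (t / R\<^sup>2) / R\<^sup>2))"
      unfolding shell_comb'_def shell_comb''_def by (simp add: sum_distrib_left sum_distrib_right sum.distrib)
    also have "\<dots> = (\<Sum>k<m. d k * shell_lapl TYPE('n) k (t / R\<^sup>2) / R\<^sup>2)"
      by (rule sum.cong[OF refl])
         (use nN in \<open>simp add: shell_lapl_def field_simps power4_eq_xxxx power2_eq_square\<close>)
    finally show ?thesis .
  qed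
  have cont: "continuous_on UNIV (shell_lapl TYPE('n) k)" for k
    unfolding shell_lapl_def[abs_def]
    using continuous_on_shell_bump' continuous_on_shell_bump'' by (auto intro!: continuous_intros)
  have outside: "\<not> (shell_lo k < t \<and> t < shell_hi k) \<Longrightarrow> shell_lapl TYPE('n) k t = 0" for k t
    by (simp add: shell_lapl_def shell_bump_outside)
  have "lap_sq (\<lambda>x::real^'n. shell_comb m d R (x \<bullet> x))
      = (\<integral>x. (\<Sum>k<m. d k * shell_lapl TYPE('n) k ((x \<bullet> x) / R\<^sup>2) / R\<^sup>2)\<^sup>2 * 1 \<partial>(lborel::(real^'n) measure))"
    unfolding lap_sq_radial[OF C2_profile_shell_comb[OF R]] by (simp add: profile)
  also have "\<dots> = (\<Sum>k<m. R ^ CARD('n)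
      * (\<integral>x. (d k * shell_lapl TYPE('n) k (x \<bullet> x) / R\<^sup>2)\<^sup>2 * 1 \<partial>(lborel::(real^'n) measure)))"
    by (rule integral_shell_sum[where \<Psi>="\<lambda>k t. d k * shell_lapl TYPE('n) k t / R\<^sup>2" and h="\<lambda>y. y\<^sup>2" and w="\<lambda>_. 1"])
       (auto intro!: continuous_intros continuous_on_compose2[OF cont] simp: outside R
         less_imp_neq[OF R, symmetric])
  also have "\<dots> = (\<Sum>k<m. R ^ CARD('n) * ((d k)\<^sup>2 / R ^ 4 * shell_lap TYPE('n) k))"
    by (simp add: shell_lap_def power_mult_distrib power_divide power4_eq_xxxx power2_eq_square mult_ac)
  finally show ?thesis .
qed

lemma grad_sq_shell_comb:
  assumes R: "R > 0"
  shows "grad_sq (\<lambda>x::real^'n::finite. shell_comb m d R (x \<bullet> x))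
    = (\<Sum>k<m. R ^ CARD('n) * ((d k)\<^sup>2 / R\<^sup>2 * shell_grad TYPE('n) k))"
proof -
  have nN: "R\<^sup>2 \<noteq> 0" using R by simp
  have profile: "4 * (shell_comb' m d R t)\<^sup>2 * t
      = (\<Sum>k<m. d k * shell_bump' k (t / R\<^sup>2))\<^sup>2 * (4 * (t / R\<^sup>2) / R\<^sup>2)" for t
  proof -
    have "shell_comb' m d R t = (\<Sum>k<m. d k * shell_bump' k (t / R\<^sup>2)) / R\<^sup>2"
      unfolding shell_comb'_def by (simp add: sum_divide_distrib)
    then show ?thesis using nN by (simp add: field_simps power2_eq_square)
  qed
  have "grad_sq (\<lambda>x::real^'n. shell_comb m d R (x \<bullet> x))
      = (\<integral>x. (\<Sum>k<m. d k * shell_bump' k ((x \<bullet> x) / R\<^sup>2))\<^sup>2 * (\<lambda>t. 4 * t / R\<^sup>2) ((x \<bullet> x) / R\<^sup>2)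
          \<partial>(lborel::(real^'n) measure))"
    unfolding grad_sq_radial[OF C2_profile_shell_comb[OF R]] by (simp add: profile)
  also have "\<dots> = (\<Sum>k<m. R ^ CARD('n)
      * (\<integral>x. (d k * shell_bump' k (x \<bullet> x))\<^sup>2 * (\<lambda>t. 4 * t / R\<^sup>2) (x \<bullet> x) \<partial>(lborel::(real^'n) measure)))"
    by (rule integral_shell_sum[where \<Psi>="\<lambda>k t. d k * shell_bump' k t" and h="\<lambda>y. y\<^sup>2" and w="\<lambda>t. 4 * t / R\<^sup>2"])
       (auto intro!: continuous_intros continuous_on_compose2[OF continuous_on_shell_bump']
         simp: shell_bump_outside R less_imp_neq[OF R, symmetric])
  also have "\<dots> = (\<Sum>k<m. R ^ CARD('n) * ((d k)\<^sup>2 / R\<^sup>2 * shell_grad TYPE('n) k))"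
  proof -
    have "(\<lambda>x::real^'n. (d k * shell_bump' k (x \<bullet> x))\<^sup>2 * (\<lambda>t. 4 * t / R\<^sup>2) (x \<bullet> x))
        = (\<lambda>x. (d k)\<^sup>2 / R\<^sup>2 * ((shell_bump' k (x \<bullet> x))\<^sup>2 * (4 * (x \<bullet> x))))" for k
      by (simp add: power_mult_distrib mult_ac)
    then show ?thesis by (simp add: shell_grad_def)
  qed
  finally show ?thesis .
qed

lemma Lpn_shell_comb:
  assumes R: "R > 0" and q: "q > 0"
  shows "Lpn q (\<lambda>x::real^'n::finite. shell_comb m d R (x \<bullet> x)) powr q
    = (\<Sum>k<m. R ^ CARD('n) * (\<bar>d k\<bar> powr q * shell_Lp TYPE('n) q k))"
proof -
  have hc: "continuous_on UNIV (\<lambda>y::real. \<bar>y\<bar> powr q)"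
    by (rule continuous_on_powr') (use q in \<open>auto intro!: continuous_intros\<close>)
  have "(\<integral>x. \<bar>shell_comb m d R (x \<bullet> x)\<bar> powr q \<partial>(lborel::(real^'n) measure))
      = (\<integral>x. \<bar>\<Sum>k<m. d k * shell_bump k ((x \<bullet> x) / R\<^sup>2)\<bar> powr q * 1 \<partial>(lborel::(real^'n) measure))"
    by (simp add: shell_comb_def)
  also have "\<dots> = (\<Sum>k<m. R ^ CARD('n) * (\<integral>x. \<bar>d k * shell_bump k (x \<bullet> x)\<bar> powr q * 1 \<partial>(lborel::(real^'n) measure)))"
    by (rule integral_shell_sum[where \<Psi>="\<lambda>k t. d k * shell_bump k t" and h="\<lambda>y. \<bar>y\<bar> powr q" and w="\<lambda>_. 1"])
       (auto intro!: continuous_intros continuous_on_compose2[OF continuous_on_shell_bump]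
         simp: shell_bump_outside R hc)
  also have "\<dots> = (\<Sum>k<m. R ^ CARD('n) * (\<bar>d k\<bar> powr q * shell_Lp TYPE('n) q k))"
    by (simp add: shell_Lp_def abs_mult powr_mult)
  finally have I: "(\<integral>x. \<bar>shell_comb m d R (x \<bullet> x)\<bar> powr q \<partial>(lborel::(real^'n) measure))
      = (\<Sum>k<m. R ^ CARD('n) * (\<bar>d k\<bar> powr q * shell_Lp TYPE('n) q k))" .
  have "(\<integral>x. \<bar>shell_comb m d R (x \<bullet> x)\<bar> powr q \<partial>(lborel::(real^'n) measure)) \<ge> 0"
    by (rule Bochner_Integration.integral_nonneg) simp
  then show ?thesis unfolding Lpn_def powr_powr using q I by (simp add: powr_one)
qed

lemma integral_pos_if_continuous:
  fixes \<phi> :: "real^'n::finite \<Rightarrow> real"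
  assumes c: "continuous_on UNIV \<phi>" and nn: "\<And>x. \<phi> x \<ge> 0" and i: "integrable lborel \<phi>" and p: "\<phi> x0 > 0"
  shows "(\<integral>x. \<phi> x \<partial>lborel) > 0"
proof (rule ccontr)
  assume "\<not> (\<integral>x. \<phi> x \<partial>lborel) > 0"
  moreover have "(\<integral>x. \<phi> x \<partial>lborel) \<ge> 0" using nn by simp
  ultimately have "(\<integral>x. \<phi> x \<partial>lborel) = 0" by simp
  then have "AE x in lborel. \<phi> x = 0" using integral_nonneg_eq_0_iff_AE[OF i] nn by simp
  then have "AE x in lebesgue. \<phi> x = 0" by (rule AE_completion)
  then have "AE x in lebesgue. x \<in> {x. \<phi> x = 0}" by simp
  moreover have "closed {x. \<phi> x = 0}"
    using continuous_closed_preimage_constant[OF c closed_UNIV, of 0] by simp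
  ultimately have "x0 \<in> {x. \<phi> x = 0}" using mem_closed_if_AE_lebesgue by blast
  then show False using p by simp
qed

lemma exists_inner_self_eq: "\<exists>x::real^'n::finite. x \<bullet> x = shell_lo k + 1/2"
proof -
  define s where "s = sqrt (shell_lo k + 1/2)"
  have "s * s = shell_lo k + 1/2" unfolding s_def by (simp add: shell_lo_def)
  then show ?thesis
    by (intro exI[of _ "s *\<^sub>R axis undefined 1"]) (simp add: inner_axis)
qed

lemma shell_L2_pos: "shell_L2 TYPE('n::finite) k > 0"
proof -
  obtain x0 :: "real^'n" where x0: "x0 \<bullet> x0 = shell_lo k + 1/2" using exists_inner_self_eq by blast
  have c: "continuous_on UNIV (\<lambda>x::real^'n. (shell_bump k (x \<bullet> x))\<^sup>2)"
    by (intro continuous_intros continuous_on_radial continuous_on_shell_bump)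
  show ?thesis unfolding shell_L2_def
  proof (rule integral_pos_if_continuous[OF c _ _, of x0])
    show "integrable lborel (\<lambda>x::real^'n. (shell_bump k (x \<bullet> x))\<^sup>2)"
      by (rule integrable_radial[where T="shell_hi k"])
         (auto intro!: continuous_intros continuous_on_shell_bump simp: shell_bump_outside)
    show "(shell_bump k (x0 \<bullet> x0))\<^sup>2 > 0" using shell_bump_pos[of k] x0 by simp
  qed simp
qed

lemma shell_Lp_pos: assumes q: "q > 0" shows "shell_Lp TYPE('n::finite) q k > 0"
proof -
  obtain x0 :: "real^'n" where x0: "x0 \<bullet> x0 = shell_lo k + 1/2" using exists_inner_self_eq by blast
  have hc: "continuous_on UNIV (\<lambda>y::real. \<bar>y\<bar> powr q)"
    by (rule continuous_on_powr') (use q in \<open>auto intro!: continuous_intros\<close>)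
  have c: "continuous_on UNIV (\<lambda>x::real^'n. \<bar>shell_bump k (x \<bullet> x)\<bar> powr q)"
    by (rule continuous_on_compose2[OF hc]) (auto intro!: continuous_on_radial continuous_on_shell_bump)
  show ?thesis unfolding shell_Lp_def
  proof (rule integral_pos_if_continuous[OF c _ _, of x0])
    show "integrable lborel (\<lambda>x::real^'n. \<bar>shell_bump k (x \<bullet> x)\<bar> powr q)"
      by (rule integrable_radial[where T="shell_hi k"])
         (auto intro!: continuous_on_compose2[OF hc] continuous_on_shell_bump simp: shell_bump_outside)
    show "\<bar>shell_bump k (x0 \<bullet> x0)\<bar> powr q > 0" using shell_bump_pos[of k] x0 by simp
  qed simp
qed

lemma shell_lap_nonneg: "shell_lap TYPE('n::finite) k \<ge> 0"
  unfolding shell_lap_def by (rule Bochner_Integration.integral_nonneg) simp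

lemma shell_grad_nonneg: "shell_grad TYPE('n::finite) k \<ge> 0"
  unfolding shell_grad_def by (rule Bochner_Integration.integral_nonneg) simp

lemma shell_Lp_nonneg: "shell_Lp TYPE('n::finite) q k \<ge> 0"
  unfolding shell_Lp_def by (rule Bochner_Integration.integral_nonneg) simp


section \<open>Positivity of \<open>r\<^sub>*\<close>\<close>

lemma crit_exp_gt_2:
  assumes "CARD('n::finite) \<ge> 5"
  shows "crit_exp TYPE('n) > 2"
proof -
  have N4: "real CARD('n) - 4 > 0" using assms by simp
  have "crit_exp TYPE('n) - 2 = 8 / (real CARD('n) - 4)"
    using N4 by (simp add: crit_exp_def field_simps)
  moreover have "8 / (real CARD('n) - 4) > 0" using N4 by simp
  ultimately show ?thesis by linarith
qed

lemma mult_gam_lt_1: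
  assumes "0 < p" "p < 2 + 4 / real CARD('n::finite)"
  shows "p * gam TYPE('n) p < 1"
proof -
  have "p * gam TYPE('n) p = real CARD('n) * (p - 2) / 4"
    using assms(1) by (simp add: gam_def field_simps)
  moreover have "real CARD('n) * (p - 2) < 4"
    using assms(2) by (simp add: field_simps)
  ultimately show ?thesis by simp
qed

text \<open>Positivity of \<open>r\<^sub>*\<close> comes for free from \<open>c < c\<^sub>*\<close>: if one of the constants
  \<open>C\<^sub>N\<^sub>,\<^sub>p\<close>, \<open>S\<close> vanished, then \<open>\<E> = 0\<close> and hence \<open>c\<^sub>* = 0\<close> (as \<open>x / 0 = 0\<close> and \<open>0 powr a = 0\<close>).\<close>

lemma r_star_pos:
  assumes N: "CARD('n::finite) \<ge> 5" and mu: "\<mu> > 0" and p: "2 < p" "p < 2 + 4 / real CARD('n)"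
    and c: "0 < c" "c < c_star TYPE('n) \<mu> p"
  shows "r_star TYPE('n) \<mu> p > 0"
proof -
  define s where "s = crit_exp TYPE('n)"
  define g where "g = gam TYPE('n) p"
  define C where "C = GN_const TYPE('n) p"
  define S where "S = Sob_const TYPE('n)"
  have s2: "s > 2" unfolding s_def by (rule crit_exp_gt_2[OF N])
  have pg: "p * g < 1" unfolding g_def by (rule mult_gam_lt_1) (use p in auto)
  have cs: "c_star TYPE('n) \<mu> p > 0" using c by simp
  then have E0: "calE TYPE('n) \<mu> p \<noteq> 0" by (auto simp: c_star_def Let_def)
  have "C \<noteq> 0"
  proof
    assume "C = 0"
    then have "calE TYPE('n) \<mu> p = 0" using p by (simp add: calE_def Let_def C_def)
    with E0 show False by simp
  qed
  moreover have "S \<noteq> 0"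
  proof
    assume "S = 0"
    then have "calE TYPE('n) \<mu> p = 0" using s2 by (simp add: calE_def Let_def S_def s_def)
    with E0 show False by simp
  qed
  ultimately have "(2 - p * g) * \<mu> * s * S powr (s / 2) * C powr p * c_star TYPE('n) \<mu> p powr (p * (1 - g) / 2)
      / ((s - 2) * p) \<noteq> 0"
    using pg mu s2 cs p by simp
  then show ?thesis
    unfolding r_star_def r_c_def Let_def s_def[symmetric] g_def[symmetric] C_def[symmetric] S_def[symmetric]
    by (simp add: powr_def)
qed

lemma ex_ge_1_less_mult:
  fixes E a :: real
  assumes "a > 0"
  shows "\<exists>R\<ge>1. E < R * a"
proof (intro exI conjI)
  have "(\<bar>E\<bar> / a + 1) * a = \<bar>E\<bar> + a" using assms by (simp add: distrib_right)
  then show "E < (\<bar>E\<bar> / a + 1) * a" using assms abs_ge_self[of E] by linarith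
qed (use assms in simp)

section \<open>Maxima on the unit sphere of coefficients\<close>

lemma square_le_1_on_unit_sphere:
  fixes s :: "nat \<Rightarrow> real"
  assumes "(\<Sum>k<m. (s k)\<^sup>2) = 1" "k < m"
  shows "(s k)\<^sup>2 \<le> 1"
proof -
  have "(s k)\<^sup>2 \<le> (\<Sum>k<m. (s k)\<^sup>2)" by (rule member_le_sum) (use assms(2) in auto)
  then show ?thesis using assms(1) by simp
qed

lemma sum_sq_weighted_le_sum:
  fixes s a :: "nat \<Rightarrow> real"
  assumes "(\<Sum>k<m. (s k)\<^sup>2) = 1" "\<And>k. k < m \<Longrightarrow> a k \<ge> 0"
  shows "(\<Sum>k<m. (s k)\<^sup>2 * a k) \<le> (\<Sum>k<m. a k)"
  by (rule sum_mono) (use assms square_le_1_on_unit_sphere in \<open>auto intro: mult_left_le_one_le\<close>)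

lemma compact_truncated_unit_sphere:
  "compact {s::nat \<Rightarrow> real. (\<Sum>k<m. (s k)\<^sup>2) = 1 \<and> (\<forall>k\<ge>m. s k = 0)}" (is "compact ?K")
proof -
  define B where "B = Pi\<^sub>E UNIV (\<lambda>k::nat. if k < m then {-1..1} else {0::real})"
  have "compactin (product_topology (\<lambda>_. euclidean) UNIV) B"
    unfolding B_def by (subst compactin_PiE) auto
  then have "compact B" by (simp add: euclidean_product_topology)
  have "?K \<subseteq> B"
  proof
    fix s assume s: "s \<in> ?K"
    have "\<bar>s k\<bar> \<le> 1" if "k < m" for k
      using square_le_1_on_unit_sphere[of s m k] s that abs_le_square_iff[of "s k" 1] by simp
    then show "s \<in> B" using s by (auto simp: B_def PiE_def Pi_def abs_le_iff)
  qed
  have "continuous_on UNIV (\<lambda>s::nat\<Rightarrow>real. \<Sum>k<m. (s k)\<^sup>2)"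
    by (intro continuous_on_sum continuous_on_power continuous_on_product_coordinates)
  then have "closed {s::nat \<Rightarrow> real. (\<Sum>k<m. (s k)\<^sup>2) = 1}"
    using continuous_closed_preimage_constant[of UNIV "\<lambda>s::nat\<Rightarrow>real. \<Sum>k<m. (s k)\<^sup>2" 1] by auto
  moreover have "closed {s::nat \<Rightarrow> real. s k = 0}" for k
    using continuous_closed_preimage_constant[of UNIV "\<lambda>s::nat\<Rightarrow>real. s k" 0] by auto
  moreover have "?K = {s. (\<Sum>k<m. (s k)\<^sup>2) = 1} \<inter> (\<Inter>k\<in>{m..}. {s. s k = 0})"
    by auto
  ultimately have "closed ?K" by (auto intro!: closed_Int closed_INT)
  with \<open>compact B\<close> \<open>?K \<subseteq> B\<close> show ?thesis
    using compact_Int_closed[of B ?K] by (simp add: Int_absorb1)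
qed

lemma continuous_attains_max_on_unit_sphere:
  fixes \<Phi> :: "(nat \<Rightarrow> real) \<Rightarrow> real"
  assumes m: "m \<ge> 1" and cont: "continuous_on UNIV \<Phi>"
    and local: "\<And>s s'. (\<And>k. k < m \<Longrightarrow> s k = s' k) \<Longrightarrow> \<Phi> s = \<Phi> s'"
  shows "\<exists>s0. (\<Sum>k<m. (s0 k)\<^sup>2) = 1 \<and> (\<forall>s. (\<Sum>k<m. (s k)\<^sup>2) = 1 \<longrightarrow> \<Phi> s \<le> \<Phi> s0)"
proof -
  define K where "K = {s::nat \<Rightarrow> real. (\<Sum>k<m. (s k)\<^sup>2) = 1 \<and> (\<forall>k\<ge>m. s k = 0)}"
  have "(\<lambda>k. if k = 0 then 1 else 0::real) \<in> K"
    using m by (auto simp: K_def if_distrib[of "\<lambda>y. y\<^sup>2"] cong: if_cong)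
  then have "K \<noteq> {}" by blast
  moreover have "compact K" unfolding K_def by (rule compact_truncated_unit_sphere)
  ultimately obtain s0 where s0: "s0 \<in> K" "\<forall>s\<in>K. \<Phi> s \<le> \<Phi> s0"
    using continuous_attains_sup[OF _ _ continuous_on_subset[OF cont]] by blast
  have "\<Phi> s \<le> \<Phi> s0" if s: "(\<Sum>k<m. (s k)\<^sup>2) = 1" for s
  proof -
    define s' where "s' k = (if k < m then s k else 0)" for k
    have "s' \<in> K" using s by (simp add: K_def s'_def)
    moreover have "\<Phi> s = \<Phi> s'" by (rule local) (simp add: s'_def)
    ultimately show ?thesis using s0(2) by simp
  qed
  then show ?thesis using s0(1) by (auto simp: K_def)
qed

lemma sum_powr_ge_on_unit_sphere:
  fixes s \<beta> :: "nat \<Rightarrow> real"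
  assumes m: "m \<ge> 1" and s: "(\<Sum>k<m. (s k)\<^sup>2) = 1" and p: "p > 0" and b: "\<And>k. k < m \<Longrightarrow> \<beta> k > 0"
  shows "(\<Sum>k<m. \<bar>s k\<bar> powr p * \<beta> k) \<ge> (1 / real m) powr (p / 2) * Min (\<beta> ` {..<m})"
proof -
  have "\<exists>j<m. (s j)\<^sup>2 \<ge> 1 / real m"
  proof (rule ccontr)
    assume "\<not> (\<exists>j<m. (s j)\<^sup>2 \<ge> 1 / real m)"
    then have lt: "(s k)\<^sup>2 < 1 / real m" if "k < m" for k using that by (meson not_le)
    have "(\<Sum>k<m. (s k)\<^sup>2) < (\<Sum>k<m. 1 / real m)"
      by (rule sum_strict_mono) (use m lt in \<open>auto simp: lessThan_empty_iff\<close>)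
    also have "\<dots> = 1" using m by simp
    finally show False using s by simp
  qed
  then obtain j where j: "j < m" "(s j)\<^sup>2 \<ge> 1 / real m" by blast
  have e: "\<bar>s j\<bar> powr p = ((s j)\<^sup>2) powr (p / 2)"
  proof -
    have a: "(s j)\<^sup>2 = \<bar>s j\<bar> powr 2" by simp
    have b: "(\<bar>s j\<bar> powr 2) powr (p / 2) = \<bar>s j\<bar> powr p" unfolding powr_powr by simp
    show ?thesis by (simp only: a b)
  qed
  have "(1 / real m) powr (p / 2) \<le> \<bar>s j\<bar> powr p"
    unfolding e by (rule powr_mono2) (use p j in auto)
  moreover have "Min (\<beta> ` {..<m}) \<le> \<beta> j" using j by (intro Min_le) auto
  moreover have "Min (\<beta> ` {..<m}) > 0" using b m by (subst Min_gr_iff) (auto simp: lessThan_empty_iff)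
  ultimately have "(1 / real m) powr (p / 2) * Min (\<beta> ` {..<m}) \<le> \<bar>s j\<bar> powr p * \<beta> j"
    by (intro mult_mono) auto
  also have "\<dots> \<le> (\<Sum>k<m. \<bar>s k\<bar> powr p * \<beta> k)"
  proof (rule member_le_sum)
    fix x assume "x \<in> {..<m} - {j}"
    then have "\<beta> x > 0" using b by auto
    then show "0 \<le> \<bar>s x\<bar> powr p * \<beta> x" by simp
  qed (use j in auto)
  finally show ?thesis .
qed

lemma unit_sphere_energy_max_neg:
  fixes a b w :: "nat \<Rightarrow> real" and \<Phi> :: "real \<Rightarrow> (nat \<Rightarrow> real) \<Rightarrow> real"
  assumes m: "m \<ge> 1" and p: "p > 0" and q: "q > 0"
    and a: "\<And>k. a k \<ge> 0" and b: "\<And>k. b k > 0" and w: "\<And>k. w k \<ge> 0"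
    and \<Phi>: "\<And>\<mu> s. \<Phi> \<mu> s = 1/2 * (\<Sum>k<m. (s k)\<^sup>2 * a k) - \<mu> / p * (\<Sum>k<m. \<bar>s k\<bar> powr p * b k)
      - 1/q * (\<Sum>k<m. \<bar>s k\<bar> powr q * w k)"
  shows "\<exists>\<mu>0>0. \<forall>\<mu>\<ge>\<mu>0. \<exists>s0. (\<Sum>k<m. (s0 k)\<^sup>2) = 1
    \<and> (\<forall>s. (\<Sum>k<m. (s k)\<^sup>2) = 1 \<longrightarrow> \<Phi> \<mu> s \<le> \<Phi> \<mu> s0) \<and> \<Phi> \<mu> s0 < 0"
proof -
  define B where "B = (1 / real m) powr (p / 2) * Min (b ` {..<m})"
  have "Min (b ` {..<m}) > 0" using b m by (subst Min_gr_iff) (auto simp: lessThan_empty_iff)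
  then have B: "B > 0" using m by (simp add: B_def)
  define \<mu>0 where "\<mu>0 = p * ((\<Sum>k<m. a k) / 2 + 1) / B"
  have "(\<Sum>k<m. a k) \<ge> 0" using a by (simp add: sum_nonneg)
  then have \<mu>0: "\<mu>0 > 0" using B p by (simp add: \<mu>0_def)
  have "\<exists>s0. (\<Sum>k<m. (s0 k)\<^sup>2) = 1 \<and> (\<forall>s. (\<Sum>k<m. (s k)\<^sup>2) = 1 \<longrightarrow> \<Phi> \<mu> s \<le> \<Phi> \<mu> s0) \<and> \<Phi> \<mu> s0 < 0"
    if \<mu>: "\<mu> \<ge> \<mu>0" for \<mu>
  proof -
    have cpow: "continuous_on UNIV (\<lambda>s::nat\<Rightarrow>real. \<bar>s k\<bar> powr e)" if "e > 0" for k e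
      by (rule continuous_on_powr')
         (use that in \<open>auto intro!: continuous_intros continuous_on_product_coordinates\<close>)
    have "continuous_on UNIV (\<Phi> \<mu>)"
      unfolding \<Phi>[abs_def]
      by (intro continuous_on_diff continuous_on_mult continuous_on_const continuous_on_sum
          continuous_on_power continuous_on_product_coordinates cpow p q)
    moreover have "\<Phi> \<mu> s = \<Phi> \<mu> s'" if "\<And>k. k < m \<Longrightarrow> s k = s' k" for s s'
      unfolding \<Phi> using that by (simp cong: sum.cong_simp)
    ultimately obtain s0 where s0: "(\<Sum>k<m. (s0 k)\<^sup>2) = 1"
      and max: "\<forall>s. (\<Sum>k<m. (s k)\<^sup>2) = 1 \<longrightarrow> \<Phi> \<mu> s \<le> \<Phi> \<mu> s0"
      using continuous_attains_max_on_unit_sphere[OF m] by blast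
    have "(\<Sum>k<m. (s0 k)\<^sup>2 * a k) \<le> (\<Sum>k<m. a k)"
      by (rule sum_sq_weighted_le_sum[OF s0]) (use a in auto)
    moreover have "(\<Sum>k<m. \<bar>s0 k\<bar> powr p * b k) \<ge> B"
      unfolding B_def by (rule sum_powr_ge_on_unit_sphere[OF m s0 p]) (use b in auto)
    then have "\<mu> / p * (\<Sum>k<m. \<bar>s0 k\<bar> powr p * b k) \<ge> \<mu>0 / p * B"
      using \<mu> B p \<mu>0 by (intro mult_mono divide_right_mono) auto
    moreover have "\<mu>0 / p * B = (\<Sum>k<m. a k) / 2 + 1" using p B by (simp add: \<mu>0_def)
    moreover have "1/q * (\<Sum>k<m. \<bar>s0 k\<bar> powr q * w k) \<ge> 0" using q w by (simp add: sum_nonneg)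
    ultimately have "\<Phi> \<mu> s0 < 0" unfolding \<Phi> by linarith
    then show ?thesis using s0 max by blast
  qed
  then show ?thesis using \<mu>0 by blast
qed

section \<open>The shell family\<close>

definition shell_amp :: "'n::finite itself \<Rightarrow> real \<Rightarrow> real \<Rightarrow> nat \<Rightarrow> real" where
  "shell_amp _ c R k = sqrt (c / (R ^ CARD('n) * shell_L2 TYPE('n) k))"

definition shell_fun :: "real \<Rightarrow> real \<Rightarrow> nat \<Rightarrow> real^'n::finite \<Rightarrow> real" where
  "shell_fun c R k x = shell_amp TYPE('n) c R k * shell_bump k ((x \<bullet> x) / R\<^sup>2)"

definition shell_energy :: "'n::finite itself \<Rightarrow> real \<Rightarrow> real \<Rightarrow> nat \<Rightarrow> real" where
  "shell_energy T c R k = c / shell_L2 T k * (shell_lap T k / R ^ 4 + shell_grad T k / R\<^sup>2)"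

definition shell_weight :: "'n::finite itself \<Rightarrow> real \<Rightarrow> real \<Rightarrow> real \<Rightarrow> nat \<Rightarrow> real" where
  "shell_weight T q c R k = R ^ CARD('n) * shell_amp T c R k powr q * shell_Lp T q k"

lemma shell_span_eq_shell_comb:
  "(\<lambda>x::real^'n::finite. \<Sum>i<m. s i * shell_fun c R i x)
     = (\<lambda>x. shell_comb m (\<lambda>k. s k * shell_amp TYPE('n) c R k) R (x \<bullet> x))"
  by (simp add: shell_fun_def shell_comb_def mult.assoc)

lemma shell_amp_sq:
  assumes "c \<ge> 0" "R > 0"
  shows "R ^ CARD('n) * (shell_amp TYPE('n::finite) c R k)\<^sup>2 = c / shell_L2 TYPE('n) k"
  using assms shell_L2_pos[of k, where 'n='n] by (simp add: shell_amp_def)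

lemma shell_amp_nonneg:
  assumes "c \<ge> 0" "R > 0"
  shows "shell_amp TYPE('n::finite) c R k \<ge> 0"
  using assms shell_L2_pos[of k, where 'n='n] by (simp add: shell_amp_def)

lemma shell_amp_pos:
  assumes "c > 0" "R > 0"
  shows "shell_amp TYPE('n::finite) c R k > 0"
  using assms shell_L2_pos[of k, where 'n='n] by (simp add: shell_amp_def)

lemma shell_energy_nonneg:
  assumes "c \<ge> 0"
  shows "shell_energy TYPE('n::finite) c R k \<ge> 0"
  using assms shell_L2_pos[of k, where 'n='n] shell_lap_nonneg[of k, where 'n='n]
    shell_grad_nonneg[of k, where 'n='n]
  by (simp add: shell_energy_def)

lemma shell_energy_le:
  assumes "c \<ge> 0" "R \<ge> 1"
  shows "shell_energy TYPE('n::finite) c R k \<le> shell_energy TYPE('n) c 1 k / R"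
proof -
  have "R \<le> R\<^sup>2" using assms(2) by (simp add: power2_eq_square)
  moreover have "R\<^sup>2 \<le> R ^ 4" by (rule power_increasing) (use assms(2) in auto)
  ultimately
  have "shell_lap TYPE('n) k / R ^ 4 \<le> shell_lap TYPE('n) k / R"
    "shell_grad TYPE('n) k / R\<^sup>2 \<le> shell_grad TYPE('n) k / R"
    using assms(2) shell_lap_nonneg[of k, where 'n='n] shell_grad_nonneg[of k, where 'n='n]
    by (auto intro!: divide_left_mono)
  then have "shell_lap TYPE('n) k / R ^ 4 + shell_grad TYPE('n) k / R\<^sup>2
      \<le> (shell_lap TYPE('n) k + shell_grad TYPE('n) k) / R"
    by (simp add: add_divide_distrib)
  then have "c / shell_L2 TYPE('n) k * (shell_lap TYPE('n) k / R ^ 4 + shell_grad TYPE('n) k / R\<^sup>2)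
      \<le> c / shell_L2 TYPE('n) k * ((shell_lap TYPE('n) k + shell_grad TYPE('n) k) / R)"
    by (rule mult_left_mono) (use assms(1) shell_L2_pos[of k, where 'n='n] in simp)
  then show ?thesis by (simp add: shell_energy_def)
qed

lemma shell_weight_pos:
  assumes "c > 0" "R > 0" "q > 0"
  shows "shell_weight TYPE('n::finite) q c R k > 0"
  using assms shell_amp_pos[of c R k, where 'n='n] shell_Lp_pos[of q k, where 'n='n]
  by (simp add: shell_weight_def)

lemma shell_weight_nonneg:
  assumes "R > 0"
  shows "shell_weight TYPE('n::finite) q c R k \<ge> 0"
  using assms shell_Lp_nonneg[of q k, where 'n='n] by (simp add: shell_weight_def)

lemma shell_fun_disjoint:
  assumes "i \<noteq> j"
  shows "shell_fun c R i x * shell_fun c R j x = 0"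
proof (rule ccontr)
  assume "shell_fun c R i x * shell_fun c R j x \<noteq> 0"
  then have "shell_bump i ((x \<bullet> x) / R\<^sup>2) \<noteq> 0" "shell_bump j ((x \<bullet> x) / R\<^sup>2) \<noteq> 0"
    by (auto simp: shell_fun_def)
  then show False using shell_bump_outside(1) shells_disjoint assms by metis
qed

lemma H2r_shell_span:
  assumes "R > 0"
  shows "H2r (\<lambda>x::real^'n::finite. \<Sum>i<m. s i * shell_fun c R i x)"
  unfolding shell_span_eq_shell_comb by (rule H2r_shell_comb[OF assms])

lemma L2_sq_shell_span:
  assumes "c \<ge> 0" "R > 0"
  shows "L2_sq (\<lambda>x::real^'n::finite. \<Sum>i<m. s i * shell_fun c R i x) = c * (\<Sum>i<m. (s i)\<^sup>2)"
proof -
  have "L2_sq (\<lambda>x::real^'n. \<Sum>i<m. s i * shell_fun c R i x)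
      = (\<Sum>k<m. (s k)\<^sup>2 * (R ^ CARD('n) * (shell_amp TYPE('n) c R k)\<^sup>2) * shell_L2 TYPE('n) k)"
    unfolding shell_span_eq_shell_comb L2_sq_shell_comb[OF assms(2)]
    by (simp add: power_mult_distrib mult_ac)
  also have "\<dots> = c * (\<Sum>i<m. (s i)\<^sup>2)"
    using shell_L2_pos[where 'n='n] by (simp add: shell_amp_sq[OF assms] sum_distrib_left mult_ac
      less_imp_neq[symmetric])
  finally show ?thesis .
qed

lemma energy_shell_span:
  fixes s :: "nat \<Rightarrow> real" and m :: nat
  assumes "c \<ge> 0" "R > 0"
  defines "v \<equiv> \<lambda>x::real^'n::finite. \<Sum>i<m. s i * shell_fun c R i x"
  shows "lap_sq v + grad_sq v = (\<Sum>k<m. (s k)\<^sup>2 * shell_energy TYPE('n) c R k)"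
proof -
  have "lap_sq v + grad_sq v = (\<Sum>k<m. (s k)\<^sup>2 * (R ^ CARD('n) * (shell_amp TYPE('n) c R k)\<^sup>2)
      * (shell_lap TYPE('n) k / R ^ 4 + shell_grad TYPE('n) k / R\<^sup>2))"
    unfolding v_def shell_span_eq_shell_comb lap_sq_shell_comb[OF assms(2)] grad_sq_shell_comb[OF assms(2)]
      sum.distrib[symmetric]
    by (rule sum.cong) (simp_all add: power_mult_distrib field_simps)
  then show ?thesis by (simp add: shell_amp_sq[OF assms(1,2)] shell_energy_def mult.assoc)
qed

lemma Lpn_shell_span:
  assumes "c \<ge> 0" "R > 0" "q > 0"
  shows "Lpn q (\<lambda>x::real^'n::finite. \<Sum>i<m. s i * shell_fun c R i x) powr q
    = (\<Sum>k<m. \<bar>s k\<bar> powr q * shell_weight TYPE('n) q c R k)"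
  unfolding shell_span_eq_shell_comb Lpn_shell_comb[OF assms(2,3)]
  by (rule sum.cong) (simp_all add: shell_weight_def abs_mult powr_mult shell_amp_nonneg[OF assms(1,2)])

lemma Ifun_shell_span:
  fixes s :: "nat \<Rightarrow> real" and m :: nat
  assumes "c \<ge> 0" "R > 0" "p > 0" "crit_exp TYPE('n::finite) > 0"
  defines "v \<equiv> \<lambda>x::real^'n. \<Sum>i<m. s i * shell_fun c R i x"
  shows "Ifun \<mu> p v = 1/2 * (\<Sum>k<m. (s k)\<^sup>2 * shell_energy TYPE('n) c R k)
    - \<mu> / p * (\<Sum>k<m. \<bar>s k\<bar> powr p * shell_weight TYPE('n) p c R k)
    - 1 / crit_exp TYPE('n)
      * (\<Sum>k<m. \<bar>s k\<bar> powr crit_exp TYPE('n) * shell_weight TYPE('n) (crit_exp TYPE('n)) c R k)"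
proof -
  have "Ifun \<mu> p v = 1/2 * (lap_sq v + grad_sq v) - \<mu> / p * Lpn p v powr p
      - 1 / crit_exp TYPE('n) * Lpn (crit_exp TYPE('n)) v powr crit_exp TYPE('n)"
    by (simp add: Ifun_def algebra_simps)
  then show ?thesis
    unfolding v_def energy_shell_span[OF assms(1,2)] Lpn_shell_span[OF assms(1-3)]
      Lpn_shell_span[OF assms(1,2,4)] .
qed

lemma shell_span_in_V_r:
  assumes c: "c > 0" and R: "R \<ge> 1"
    and small: "(\<Sum>k<m. shell_energy TYPE('n::finite) c 1 k) < R * (r_star TYPE('n) \<mu> p)\<^sup>2"
    and s: "(\<Sum>i<m. (s i)\<^sup>2) = 1"
  shows "(\<lambda>x::real^'n. \<Sum>i<m. s i * shell_fun c R i x) \<in> V_r \<mu> p c"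
proof -
  have R0: "R > 0" using R by simp
  have "lap_sq (\<lambda>x::real^'n. \<Sum>i<m. s i * shell_fun c R i x)
      + grad_sq (\<lambda>x::real^'n. \<Sum>i<m. s i * shell_fun c R i x)
      = (\<Sum>k<m. (s k)\<^sup>2 * shell_energy TYPE('n) c R k)"
    by (rule energy_shell_span) (use c R0 in auto)
  also have "\<dots> \<le> (\<Sum>k<m. shell_energy TYPE('n) c R k)"
    by (rule sum_sq_weighted_le_sum[OF s]) (use shell_energy_nonneg[OF less_imp_le[OF c]] in auto)
  also have "\<dots> \<le> (\<Sum>k<m. shell_energy TYPE('n) c 1 k) / R"
    unfolding sum_divide_distrib by (rule sum_mono) (use c R shell_energy_le[where 'n='n] in auto)
  also have "\<dots> < (r_star TYPE('n) \<mu> p)\<^sup>2"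
    using small R0 by (simp add: divide_less_eq mult.commute)
  finally show ?thesis
    unfolding V_r_def S_r_def using H2r_shell_span[OF R0] L2_sq_shell_span[where 'n='n, of c R] c R0 s by simp
qed

lemma shell_fun_in_V_r:
  assumes "c > 0" "R \<ge> 1" "(\<Sum>k<m. shell_energy TYPE('n::finite) c 1 k) < R * (r_star TYPE('n) \<mu> p)\<^sup>2"
    and i: "i < m"
  shows "(shell_fun c R i :: real^'n \<Rightarrow> real) \<in> V_r \<mu> p c"
proof -
  have "(\<lambda>x::real^'n. \<Sum>k<m. (if k = i then 1 else 0) * shell_fun c R k x) = shell_fun c R i"
    "(\<Sum>k<m. (if k = i then 1 else 0 :: real)\<^sup>2) = 1"
    using i by (simp_all add: if_distrib[of "\<lambda>y. y * _"] if_distrib[of "\<lambda>y. y\<^sup>2"] cong: if_cong)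
  then show ?thesis using shell_span_in_V_r[OF assms(1-3)] by metis
qed

lemma shell_span_AE_zero_imp_zero:
  assumes c: "c > 0" and R: "R > 0"
    and zero: "AE x in lborel. (\<Sum>i<m. s i * shell_fun c R i (x::real^'n::finite)) = 0" and i: "i < m"
  shows "s i = 0"
proof -
  have "(\<lambda>x::real^'n. \<Sum>i<m. s i * shell_fun c R i x) \<in> borel_measurable lborel"
    using H2r_shell_span[where 'n='n, OF R] by (simp add: H2r_def H2_def L2_def)
  then have "L2_sq (\<lambda>x::real^'n. \<Sum>i<m. s i * shell_fun c R i x) = (\<integral>x. 0 \<partial>(lborel::(real^'n) measure))"
    unfolding L2_sq_def by (intro integral_cong_AE) (use zero in auto)
  then have "(\<Sum>k<m. (s k)\<^sup>2) = 0" using L2_sq_shell_span[where 'n='n, of c R] c R by simp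
  then show ?thesis using i by (simp add: sum_nonneg_eq_0_iff)
qed

lemma shell_span_energy_max_neg:
  assumes c: "c > 0" and R: "R > 0" and m: "m \<ge> 1" and p: "p > 0" and crit: "crit_exp TYPE('n::finite) > 0"
  defines "T \<equiv> {(\<lambda>x::real^'n. \<Sum>i<m. s i * shell_fun c R i x) | s. (\<Sum>i<m. (s i)\<^sup>2) = 1}"
  shows "\<exists>\<mu>m>0. \<forall>\<mu>' \<ge> \<mu>m. \<exists>u0\<in>T. (\<forall>v\<in>T. Ifun \<mu>' p v \<le> Ifun \<mu>' p u0) \<and> Ifun \<mu>' p u0 < 0"
proof -
  define v where "v s = (\<lambda>x::real^'n. \<Sum>i<m. s i * shell_fun c R i x)" for s
  have T: "T = {v s | s. (\<Sum>i<m. (s i)\<^sup>2) = 1}" by (simp add: T_def v_def)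
  note I = Ifun_shell_span[OF less_imp_le[OF c] R p crit, where m=m, folded v_def]
  have "\<exists>\<mu>m>0. \<forall>\<mu>'\<ge>\<mu>m. \<exists>s0. (\<Sum>k<m. (s0 k)\<^sup>2) = 1
      \<and> (\<forall>s. (\<Sum>k<m. (s k)\<^sup>2) = 1 \<longrightarrow> Ifun \<mu>' p (v s) \<le> Ifun \<mu>' p (v s0)) \<and> Ifun \<mu>' p (v s0) < 0"
    by (rule unit_sphere_energy_max_neg[OF m p crit _ _ _ I])
       (simp_all add: shell_energy_nonneg shell_weight_pos shell_weight_nonneg c R p less_imp_le)
  then obtain \<mu>m where "\<mu>m > 0" and max: "\<forall>\<mu>'\<ge>\<mu>m. \<exists>s0. (\<Sum>k<m. (s0 k)\<^sup>2) = 1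
      \<and> (\<forall>s. (\<Sum>k<m. (s k)\<^sup>2) = 1 \<longrightarrow> Ifun \<mu>' p (v s) \<le> Ifun \<mu>' p (v s0)) \<and> Ifun \<mu>' p (v s0) < 0"
    by blast
  show ?thesis
  proof (intro exI[of _ \<mu>m] conjI allI impI)
    fix \<mu>' assume "\<mu>' \<ge> \<mu>m"
    with max obtain s0 where s0: "(\<Sum>k<m. (s0 k)\<^sup>2) = 1" "Ifun \<mu>' p (v s0) < 0"
      and le: "\<And>s. (\<Sum>k<m. (s k)\<^sup>2) = 1 \<Longrightarrow> Ifun \<mu>' p (v s) \<le> Ifun \<mu>' p (v s0)"
      by blast
    show "\<exists>u0\<in>T. (\<forall>w\<in>T. Ifun \<mu>' p w \<le> Ifun \<mu>' p u0) \<and> Ifun \<mu>' p u0 < 0"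
      unfolding T using s0 le by blast
  qed (rule \<open>\<mu>m > 0\<close>)
qed

theorem lemma4p1:
  fixes \<mu> p c :: real and m :: nat
  assumes "CARD('n::finite) \<ge> 5" and "\<mu> > 0" and "2 < p" and "p < 2 + 4 / real CARD('n)"
    and "0 < c" and "c < c_star TYPE('n) \<mu> p" and "m \<ge> 1"
  shows "\<exists>u :: nat \<Rightarrow> (real^'n \<Rightarrow> real).
     (\<forall>i<m. u i \<in> V_r \<mu> p c) \<and>
     (\<forall>i<m. \<forall>j<m. i \<noteq> j \<longrightarrow> (\<integral>x. u i x * u j x \<partial>lborel) = 0) \<and>
     (\<forall>s::nat \<Rightarrow> real. (AE x in lborel. (\<Sum>i<m. s i * u i x) = 0) \<longrightarrow> (\<forall>i<m. s i = 0)) \<and>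
     (\<forall>s::nat \<Rightarrow> real. H2r (\<lambda>x. \<Sum>i<m. s i * u i x)) \<and>
     {(\<lambda>x. \<Sum>i<m. s i * u i x) | s. (\<Sum>i<m. (s i)\<^sup>2) = 1} \<subseteq> V_r \<mu> p c \<and>
     (\<exists>\<mu>m > 0. \<forall>\<mu>' \<ge> \<mu>m.
        \<exists>u0 \<in> {(\<lambda>x. \<Sum>i<m. s i * u i x) | s. (\<Sum>i<m. (s i)\<^sup>2) = 1}.
          (\<forall>v \<in> {(\<lambda>x. \<Sum>i<m. s i * u i x) | s. (\<Sum>i<m. (s i)\<^sup>2) = 1}. Ifun \<mu>' p v \<le> Ifun \<mu>' p u0)
          \<and> Ifun \<mu>' p u0 < 0)"
proof -
  have "r_star TYPE('n) \<mu> p > 0" using r_star_pos assms by blast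
  then have "(r_star TYPE('n) \<mu> p)\<^sup>2 > 0" by simp
  then obtain R where R: "R \<ge> 1" "(\<Sum>k<m. shell_energy TYPE('n) c 1 k) < R * (r_star TYPE('n) \<mu> p)\<^sup>2"
    using ex_ge_1_less_mult by blast
  then have "R > 0" by simp
  have "crit_exp TYPE('n) > 0" using crit_exp_gt_2[OF assms(1)] by simp
  define u :: "nat \<Rightarrow> real^'n \<Rightarrow> real" where "u = shell_fun c R"
  show ?thesis
  proof (intro exI[of _ u] conjI)
    show "\<forall>i<m. u i \<in> V_r \<mu> p c" unfolding u_def by (intro allI impI shell_fun_in_V_r[OF assms(5) R])
    show "\<forall>i<m. \<forall>j<m. i \<noteq> j \<longrightarrow> (\<integral>x. u i x * u j x \<partial>lborel) = 0"
      unfolding u_def by (simp add: shell_fun_disjoint del: mult_eq_0_iff)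
    show "\<forall>s. (AE x in lborel. (\<Sum>i<m. s i * u i x) = 0) \<longrightarrow> (\<forall>i<m. s i = 0)"
      unfolding u_def by (intro allI impI) (erule shell_span_AE_zero_imp_zero[OF assms(5) \<open>R > 0\<close>], assumption)
    show "\<forall>s. H2r (\<lambda>x. \<Sum>i<m. s i * u i x)" unfolding u_def by (intro allI H2r_shell_span[OF \<open>R > 0\<close>])
    show "{(\<lambda>x. \<Sum>i<m. s i * u i x) | s. (\<Sum>i<m. (s i)\<^sup>2) = 1} \<subseteq> V_r \<mu> p c"
      unfolding u_def by (auto intro!: shell_span_in_V_r[OF assms(5) R])
    show "\<exists>\<mu>m>0. \<forall>\<mu>'\<ge>\<mu>m. \<exists>u0\<in>{(\<lambda>x. \<Sum>i<m. s i * u i x) | s. (\<Sum>i<m. (s i)\<^sup>2) = 1}.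
        (\<forall>v\<in>{(\<lambda>x. \<Sum>i<m. s i * u i x) | s. (\<Sum>i<m. (s i)\<^sup>2) = 1}. Ifun \<mu>' p v \<le> Ifun \<mu>' p u0)
        \<and> Ifun \<mu>' p u0 < 0"
      unfolding u_def by (rule shell_span_energy_max_neg) (use assms \<open>R > 0\<close> \<open>crit_exp TYPE('n) > 0\<close> in auto)
  qed
qed

end
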